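(* Let $\Omega\subset\mathbb R^n$, $n\ge2$, be a bounded domain with $\partial\Omega$ of class $C^{2,\alpha}$, and let $\Sigma$ be a closed smooth submanifold of $\Omega$ of codimension at least $2$ (possibly with $\partial\Sigma\ne\emptyset$). Let $u\in C^2(\Omega\setminus\Sigma)\cap C^1(\overline\Omega\setminus\Sigma)$ satisfy $\Delta u\ge0$ in $\Omega\setminus\Sigma$, $0\le u\le1$ in $\Omega\setminus\Sigma$, and $u=0$ on $\partial\Omega$. Then $u\equiv0$. *)

theory Defs
  imports "HOL-Analysis.Analysis"
begin

fun Ck_on :: "nat \<Rightarrow> 'a::euclidean_space set \<Rightarrow> ('a \<Rightarrow> 'b::real_normed_vector) \<Rightarrow> bool" where
  "Ck_on 0 S f = continuous_on S f"
| "Ck_on (Suc k) S f =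
     ((\<forall>x\<in>S. f differentiable (at x)) \<and>
      (\<forall>i\<in>Basis. Ck_on k S (\<lambda>x. frechet_derivative f (at x) i)))"

definition smooth_on :: "'a::euclidean_space set \<Rightarrow> ('a \<Rightarrow> 'b::real_normed_vector) \<Rightarrow> bool" where
  "smooth_on S f \<longleftrightarrow> (\<forall>k. Ck_on k S f)"

definition partial :: "('a::euclidean_space \<Rightarrow> real) \<Rightarrow> 'a \<Rightarrow> 'a \<Rightarrow> real" where
  "partial f i x = frechet_derivative f (at x) i"

definition laplacian :: "('a::euclidean_space \<Rightarrow> real) \<Rightarrow> 'a \<Rightarrow> real" where
  "laplacian u x = (\<Sum>i\<in>Basis. partial (partial u i) i x)"

definition C1_upto :: "'a::euclidean_space set \<Rightarrow> 'a set \<Rightarrow> ('a \<Rightarrow> real) \<Rightarrow> bool" where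
  "C1_upto \<Omega> \<Sigma> u \<longleftrightarrow>
     Ck_on 1 (\<Omega> - \<Sigma>) u \<and> continuous_on (closure \<Omega> - \<Sigma>) u \<and>
     (\<forall>i\<in>Basis. \<exists>g. continuous_on (closure \<Omega> - \<Sigma>) g \<and>
                     (\<forall>x\<in>\<Omega> - \<Sigma>. g x = partial u i x))"

text \<open>Boundary of class C^{2,alpha}: near every boundary point, Omega is the sublevel set
  {psi < 0} of a local defining function psi of class C^{2,alpha} with nonvanishing gradient.\<close>
definition C2alpha_boundary :: "real \<Rightarrow> 'a::euclidean_space set \<Rightarrow> bool" where
  "C2alpha_boundary \<alpha> \<Omega> \<longleftrightarrow>
     (\<forall>p\<in>frontier \<Omega>. \<exists>U \<psi> C. open U \<and> p \<in> U \<and> Ck_on 2 U \<psi> \<and>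
        (\<forall>x\<in>U. \<exists>i\<in>Basis. partial \<psi> i x \<noteq> 0) \<and>
        \<Omega> \<inter> U = {x\<in>U. \<psi> x < 0} \<and>
        (\<forall>i\<in>Basis. \<forall>j\<in>Basis. \<forall>x\<in>U. \<forall>y\<in>U.
           \<bar>partial (partial \<psi> i) j x - partial (partial \<psi> i) j y\<bar> \<le> C * norm (x - y) powr \<alpha>))"

definition smooth_diffeo :: "'a::euclidean_space set \<Rightarrow> 'a set \<Rightarrow> ('a \<Rightarrow> 'a) \<Rightarrow> bool" where
  "smooth_diffeo U V \<phi> \<longleftrightarrow> open U \<and> open V \<and> smooth_on U \<phi> \<and> \<phi> ` U = V \<and>
     (\<exists>\<psi>. smooth_on V \<psi> \<and> (\<forall>x\<in>U. \<psi> (\<phi> x) = x) \<and> (\<forall>y\<in>V. \<phi> (\<psi> y) = y))"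

text \<open>Sigma is a smooth embedded submanifold (possibly with boundary) of codimension at least 2:
  around each of its points it is straightened by a smooth diffeomorphism to a coordinate
  subspace spanned by a set B of at most n-2 basis vectors, or to a closed half of such a
  subspace (boundary points).\<close>
definition smooth_submanifold_codim2 :: "'a::euclidean_space set \<Rightarrow> bool" where
  "smooth_submanifold_codim2 \<Sigma> \<longleftrightarrow>
     (\<forall>p\<in>\<Sigma>. \<exists>U V \<phi> B. p \<in> U \<and> smooth_diffeo U V \<phi> \<and> B \<subseteq> Basis \<and>
        card B + 2 \<le> DIM('a) \<and>
        (\<phi> ` (\<Sigma> \<inter> U) = V \<inter> span B \<or>
         (\<exists>b\<in>B. \<phi> ` (\<Sigma> \<inter> U) = V \<inter> {y\<in>span B. y \<bullet> b \<ge> 0})))"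

end

theory Submission
  imports Defs
begin

text \<open>Near a point of \<open>\<Sigma>\<close>, two coordinate functions \<open>f1, f2\<close> of a straightening chart vanish on
  \<open>\<Sigma>\<close> and have independent gradients. With \<open>A\<close> the Gram matrix of \<open>\<nabla>f1, \<nabla>f2\<close>, the form
  \<open>Q = (f1, f2) adj(A) (f1, f2)\<^sup>T\<close> is comparable to the squared distance from \<open>{f1 = f2 = 0}\<close>, and
  the adjugate makes the leading terms in the second derivatives of \<open>ln Q\<close> cancel, as for the
  harmonic function \<open>ln \<bar>x\<bar>\<close> in the plane. So \<open>G = - ln Q - K \<surd>Q\<close> tends to \<open>+\<infinity>\<close> at \<open>\<Sigma>\<close> while
  its Laplacian stays bounded above, and for subharmonic \<open>u\<close> the function
  \<open>u + \<beta>\<cdot>y + \<delta>|y - p|\<^sup>2 - \<epsilon> G\<close> has no maximum near \<open>\<Sigma>\<close>. This gives a maximum principle on small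
  balls around the points of \<open>\<Sigma>\<close>; hence the supremum of \<open>u + \<delta>|x|\<^sup>2\<close> over \<open>\<Omega> - \<Sigma>\<close> is approached
  only at \<open>\<partial>\<Omega>\<close>, where \<open>u = 0\<close>, and letting \<open>\<delta> \<rightarrow> 0\<close> gives \<open>u \<le> 0\<close>.\<close>

lemma Ck_on_cong:
  assumes "open S" "\<And>x. x \<in> S \<Longrightarrow> f x = g x"
  shows "Ck_on k S f = Ck_on k S g"
  using assms(2)
proof (induction k arbitrary: f g)
  case 0
  then show ?case using continuous_on_cong by (metis Ck_on.simps(1))
next
  case (Suc k)
  have "(f has_derivative D) (at x) \<longleftrightarrow> (g has_derivative D) (at x)" if "x \<in> S" for x D
    using has_derivative_transform_within_open[OF _ assms(1) that, of f _ UNIV g]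
          has_derivative_transform_within_open[OF _ assms(1) that, of g _ UNIV f] Suc.prems
    by metis
  then have "f differentiable (at x) \<longleftrightarrow> g differentiable (at x)"
    and "frechet_derivative f (at x) = frechet_derivative g (at x)" if "x \<in> S" for x
    using that unfolding differentiable_def frechet_derivative_def by simp_all
  then show ?case
    using Suc.IH[of "\<lambda>x. frechet_derivative f (at x) _" "\<lambda>x. frechet_derivative g (at x) _"]
    by (auto simp only: Ck_on.simps)
qed

lemma Ck_on_imp_continuous_on: "Ck_on k S f \<Longrightarrow> continuous_on S f"
  by (cases k) (auto intro!: continuous_at_imp_continuous_on differentiable_imp_continuous_within)

lemma Ck_on_partial: "Ck_on (Suc k) S f \<Longrightarrow> i \<in> Basis \<Longrightarrow> Ck_on k S (partial f i)"
  by (simp add: partial_def[abs_def])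

lemma Ck_on_2_partials:
  assumes "Ck_on 2 S u" "x \<in> S" "i \<in> Basis"
  shows "u differentiable (at x)" "partial u i differentiable (at x)"
  using assms by (simp_all add: numeral_2_eq_2 partial_def[abs_def])

lemma Ck_on_3_partials:
  fixes g :: "'a::euclidean_space \<Rightarrow> real"
  assumes "Ck_on 3 U g" "e \<in> Basis" "i \<in> Basis"
  shows "Ck_on 2 U (partial g e)" "Ck_on 1 U (partial (partial g e) i)"
    "continuous_on U (partial (partial (partial g e) i) i)"
proof -
  show c2: "Ck_on 2 U (partial g e)"
    using Ck_on_partial[of 2 U g e] assms by (simp add: numeral_3_eq_3 numeral_2_eq_2)
  show c1: "Ck_on 1 U (partial (partial g e) i)"
    using Ck_on_partial[of 1 U "partial g e" i] c2 assms by (simp add: numeral_2_eq_2)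
  show "continuous_on U (partial (partial (partial g e) i) i)"
    using Ck_on_partial[of 0 U "partial (partial g e) i" i] c1 assms by simp
qed

lemma Ck_on_3_differentiable:
  fixes g :: "'a::euclidean_space \<Rightarrow> real"
  assumes "Ck_on 3 U g" "x \<in> U"
  shows "g differentiable (at x)"
    and "e \<in> Basis \<Longrightarrow> partial g e differentiable (at x)"
    and "e \<in> Basis \<Longrightarrow> i \<in> Basis \<Longrightarrow> partial (partial g e) i differentiable (at x)"
  using assms Ck_on_3_partials[OF assms(1)] by (simp_all add: numeral_3_eq_3 numeral_2_eq_2)

lemma Ck_on_3_continuous:
  fixes g :: "'a::euclidean_space \<Rightarrow> real"
  assumes "Ck_on 3 U g"
  shows "continuous_on U g"
    and "e \<in> Basis \<Longrightarrow> continuous_on U (partial g e)"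
    and "e \<in> Basis \<Longrightarrow> i \<in> Basis \<Longrightarrow> continuous_on U (partial (partial g e) i)"
    and "e \<in> Basis \<Longrightarrow> i \<in> Basis \<Longrightarrow> continuous_on U (partial (partial (partial g e) i) i)"
  using assms Ck_on_3_partials[OF assms] Ck_on_imp_continuous_on by blast+

lemma has_derivative_inner_const:
  assumes "\<phi> differentiable (at x)"
  shows "((\<lambda>x. \<phi> x \<bullet> a) has_derivative (\<lambda>h. frechet_derivative \<phi> (at x) h \<bullet> a)) (at x)"
  using assms by (auto simp: frechet_derivative_works intro!: derivative_eq_intros)

lemma partial_inner_const:
  assumes "\<phi> differentiable (at x)"
  shows "partial (\<lambda>x. \<phi> x \<bullet> a) i x = frechet_derivative \<phi> (at x) i \<bullet> a"
  unfolding partial_def by (simp flip: frechet_derivative_at[OF has_derivative_inner_const[OF assms]])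

lemma Ck_on_inner_const:
  assumes "open S" "Ck_on k S \<phi>"
  shows "Ck_on k S (\<lambda>x. \<phi> x \<bullet> a)"
  using assms(2)
proof (induction k arbitrary: \<phi>)
  case 0
  then show ?case by (auto intro!: continuous_intros)
next
  case (Suc k)
  have diff: "(\<lambda>x. \<phi> x \<bullet> a) differentiable (at x)" if "x \<in> S" for x
    using has_derivative_inner_const[of \<phi> x a] Suc.prems that
    unfolding differentiable_def[of "\<lambda>x. \<phi> x \<bullet> a"] by auto
  have "Ck_on k S (\<lambda>x. frechet_derivative (\<lambda>x. \<phi> x \<bullet> a) (at x) i)" if i: "i \<in> Basis" for i
  proof -
    have "Ck_on k S (\<lambda>x. frechet_derivative \<phi> (at x) i \<bullet> a)"
      using Suc i by simp
    moreover have "frechet_derivative (\<lambda>x. \<phi> x \<bullet> a) (at x) i = frechet_derivative \<phi> (at x) i \<bullet> a"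
      if "x \<in> S" for x
      using partial_inner_const[of \<phi> x a i] Suc.prems that by (simp add: partial_def)
    ultimately show ?thesis
      using Ck_on_cong[OF assms(1), of "\<lambda>x. frechet_derivative (\<lambda>x. \<phi> x \<bullet> a) (at x) i"] by simp
  qed
  then show ?case using diff by simp
qed

lemma DERIV_line_partial:
  fixes F :: "'a::euclidean_space \<Rightarrow> real"
  assumes "F differentiable (at (y + t *\<^sub>R i))"
  shows "((\<lambda>s. F (y + s *\<^sub>R i)) has_real_derivative partial F i (y + t *\<^sub>R i)) (at t)"
proof -
  define D where "D = frechet_derivative F (at (y + t *\<^sub>R i))"
  have F: "(F has_derivative D) (at (y + t *\<^sub>R i))"
    using assms by (simp add: D_def frechet_derivative_works)
  have "((\<lambda>s. y + s *\<^sub>R i) has_derivative (\<lambda>h. h *\<^sub>R i)) (at t)"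
    by (auto intro!: derivative_eq_intros)
  from has_derivative_compose[OF this F]
  have "((\<lambda>s. F (y + s *\<^sub>R i)) has_derivative (\<lambda>h. D (h *\<^sub>R i))) (at t)"
    by (simp add: o_def)
  moreover have "D (h *\<^sub>R i) = partial F i (y + t *\<^sub>R i) * h" for h
    using linear_cmul[OF has_derivative_linear[OF F]] by (simp add: partial_def D_def mult.commute)
  ultimately show ?thesis
    unfolding has_field_derivative_def by simp
qed

lemma DERIV_line_paraboloid:
  "((\<lambda>s. \<beta> \<bullet> (y + s *\<^sub>R i) + \<delta> * ((y + s *\<^sub>R i - p) \<bullet> (y + s *\<^sub>R i - p)))
     has_real_derivative \<beta> \<bullet> i + 2 * \<delta> * ((y + t *\<^sub>R i - p) \<bullet> i)) (at t)"
proof -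
  have "(\<lambda>s. \<beta> \<bullet> (y + s *\<^sub>R i) + \<delta> * ((y + s *\<^sub>R i - p) \<bullet> (y + s *\<^sub>R i - p)))
      = (\<lambda>s. \<beta> \<bullet> y + s * (\<beta> \<bullet> i)
           + \<delta> * ((y - p) \<bullet> (y - p) + 2 * s * ((y - p) \<bullet> i) + s * s * (i \<bullet> i)))"
    by (simp add: fun_eq_iff algebra_simps inner_add_left inner_add_right inner_diff_left
        inner_diff_right inner_commute)
  moreover have "\<beta> \<bullet> i + \<delta> * (2 * ((y - p) \<bullet> i) + 2 * t * (i \<bullet> i))
      = \<beta> \<bullet> i + 2 * \<delta> * ((y + t *\<^sub>R i - p) \<bullet> i)"
    by (simp add: algebra_simps inner_add_left inner_diff_left)
  ultimately show ?thesis
    by (auto intro!: derivative_eq_intros)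
qed

lemma DERIV_line_paraboloid_deriv:
  assumes "i \<in> Basis"
  shows "((\<lambda>s. \<beta> \<bullet> i + 2 * \<delta> * ((y + s *\<^sub>R i - p) \<bullet> i)) has_real_derivative 2 * \<delta>) (at t)"
proof -
  have "(\<lambda>s. \<beta> \<bullet> i + 2 * \<delta> * ((y + s *\<^sub>R i - p) \<bullet> i)) = (\<lambda>s. \<beta> \<bullet> i + 2 * \<delta> * ((y - p) \<bullet> i) + 2 * \<delta> * s)"
    using assms by (simp add: fun_eq_iff algebra_simps inner_add_left inner_diff_left)
  then show ?thesis
    by (auto intro!: derivative_eq_intros)
qed

lemma paraboloid_le_on_cball:
  assumes "y \<in> cball p r" "0 \<le> \<delta>"
  shows "\<beta> \<bullet> y + \<delta> * ((y - p) \<bullet> (y - p)) \<le> norm \<beta> * (norm p + r) + \<delta> * r\<^sup>2"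
proof -
  have "norm y \<le> norm p + r"
    using assms(1) norm_triangle_sub[of y p] by (simp add: dist_norm norm_minus_commute)
  then have "\<beta> \<bullet> y \<le> norm \<beta> * (norm p + r)"
    by (meson Cauchy_Schwarz_ineq2 abs_le_iff mult_left_mono norm_ge_zero order_trans)
  moreover have "(y - p) \<bullet> (y - p) \<le> r\<^sup>2"
    using assms(1) by (simp add: dist_norm norm_minus_commute power_mono flip: power2_norm_eq_inner)
  then have "\<delta> * ((y - p) \<bullet> (y - p)) \<le> \<delta> * r\<^sup>2"
    using assms(2) by (simp add: mult_left_mono)
  ultimately show ?thesis
    by simp
qed

lemma local_max_second_derivative_nonpos:
  fixes g g' :: "real \<Rightarrow> real"
  assumes "e > 0" and max: "\<And>t. \<bar>t\<bar> < e \<Longrightarrow> g t \<le> g 0"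
    and g: "\<And>t. \<bar>t\<bar> < e \<Longrightarrow> (g has_real_derivative g' t) (at t)"
    and g': "(g' has_real_derivative d) (at 0)"
  shows "d \<le> 0"
proof (rule ccontr)
  assume "\<not> d \<le> 0"
  then obtain s where s: "s > 0" "\<And>h. h > 0 \<Longrightarrow> h < s \<Longrightarrow> g' 0 < g' h"
    using DERIV_pos_inc_right[OF g'] by force
  have g'0: "g' 0 = 0"
    using DERIV_local_max[OF g[of 0] \<open>e > 0\<close>] max \<open>e > 0\<close> by auto
  define t where "t = min s e / 2"
  have t: "0 < t" "t < s" "t < e"
    using s \<open>e > 0\<close> by (auto simp: t_def)
  obtain z where z: "0 < z" "z < t" "g t - g 0 = t * g' z"
    using MVT2[of 0 t g g'] t g by force
  have "g t > g 0"
    using s(2)[of z] z t g'0 by (simp add: algebra_simps)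
  then show False
    using max[of t] t by simp
qed

lemma DERIV_line_shift:
  fixes F :: "'a::real_normed_vector \<Rightarrow> real"
  assumes "((\<lambda>s. F (x + t *\<^sub>R i + s *\<^sub>R i)) has_real_derivative D) (at 0)"
  shows "((\<lambda>s. F (x + s *\<^sub>R i)) has_real_derivative D) (at t)"
proof -
  have "(\<lambda>s. F (x + t *\<^sub>R i + s *\<^sub>R i)) = (\<lambda>s. F (x + (s + t) *\<^sub>R i))"
    by (simp add: scaleR_add_left add_ac)
  then show ?thesis
    using DERIV_shift[of "\<lambda>s. F (x + s *\<^sub>R i)" D 0 t] assms by simp
qed

section \<open>The algebraic estimate behind the barrier\<close>

lemma abs_mult_mono: "\<bar>x\<bar> \<le> X \<Longrightarrow> \<bar>y\<bar> \<le> Y \<Longrightarrow> \<bar>x * y\<bar> \<le> X * (Y::real)"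
  by (simp add: abs_mult mult_mono')

lemma abs_sum_le_card_mult:
  assumes "\<And>i. i \<in> I \<Longrightarrow> \<bar>x i\<bar> \<le> (b::real)"
  shows "\<bar>\<Sum>i\<in>I. x i\<bar> \<le> real (card I) * b"
  using order_trans[OF sum_abs sum_bounded_above[of I "\<lambda>i. \<bar>x i\<bar>" b]] assms by simp

lemma quadratic_form_abs_le:
  fixes a b c f1 f2 :: real
  assumes "\<bar>a\<bar> \<le> \<Lambda>" "\<bar>b\<bar> \<le> \<Lambda>" "\<bar>c\<bar> \<le> \<Lambda>"
  shows "\<bar>a * f1\<^sup>2 + 2 * b * f1 * f2 + c * f2\<^sup>2\<bar> \<le> \<Lambda> * (\<bar>f1\<bar> + \<bar>f2\<bar>)\<^sup>2"
proof -
  have "\<bar>a * f1\<^sup>2\<bar> \<le> \<Lambda> * \<bar>f1\<bar>\<^sup>2" "\<bar>b * (f1 * f2)\<bar> \<le> \<Lambda> * (\<bar>f1\<bar> * \<bar>f2\<bar>)" "\<bar>c * f2\<^sup>2\<bar> \<le> \<Lambda> * \<bar>f2\<bar>\<^sup>2"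
    using assms by (auto intro: mult_right_mono simp: abs_mult)
  moreover have "\<Lambda> * (\<bar>f1\<bar> + \<bar>f2\<bar>)\<^sup>2 = \<Lambda> * \<bar>f1\<bar>\<^sup>2 + 2 * (\<Lambda> * (\<bar>f1\<bar> * \<bar>f2\<bar>)) + \<Lambda> * \<bar>f2\<bar>\<^sup>2"
    by (simp add: power2_eq_square algebra_simps)
  ultimately show ?thesis
    by (simp only: abs_le_iff mult.assoc) linarith
qed

lemma bilinear_form_abs_le:
  fixes a b c f1 f2 p1 p2 :: real
  assumes "\<bar>a\<bar> \<le> X" "\<bar>b\<bar> \<le> X" "\<bar>c\<bar> \<le> X" "\<bar>p1\<bar> \<le> Y" "\<bar>p2\<bar> \<le> Y"
  shows "\<bar>a * f1 * p1 + b * (p1 * f2 + f1 * p2) + c * f2 * p2\<bar> \<le> 2 * X * Y * (\<bar>f1\<bar> + \<bar>f2\<bar>)"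
proof -
  have "\<bar>a * p1\<bar> \<le> X * Y" "\<bar>b * p1\<bar> \<le> X * Y" "\<bar>b * p2\<bar> \<le> X * Y" "\<bar>c * p2\<bar> \<le> X * Y"
    using assms by (auto intro: abs_mult_mono)
  then have "\<bar>(a * p1) * f1\<bar> \<le> X * Y * \<bar>f1\<bar>" "\<bar>(b * p1) * f2\<bar> \<le> X * Y * \<bar>f2\<bar>"
    "\<bar>(b * p2) * f1\<bar> \<le> X * Y * \<bar>f1\<bar>" "\<bar>(c * p2) * f2\<bar> \<le> X * Y * \<bar>f2\<bar>"
    by (auto intro: abs_mult_mono)
  then show ?thesis
    by (simp only: abs_le_iff algebra_simps) linarith
qed

text \<open>With \<open>A\<close> the Gram matrix of \<open>p1, p2\<close> and \<open>(\<alpha>, \<beta>) = adj(A) (f1, f2)\<close>, these two identities make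
  the leading terms in the second derivatives of \<open>ln Q\<close> cancel.\<close>

lemma gram_adjugate_sum_squares:
  fixes p1 p2 :: "'i \<Rightarrow> real"
  assumes "A11 = (\<Sum>i\<in>I. p1 i * p1 i)" "A12 = (\<Sum>i\<in>I. p1 i * p2 i)" "A22 = (\<Sum>i\<in>I. p2 i * p2 i)"
  shows "(\<Sum>i\<in>I. ((A22*f1 - A12*f2) * p1 i + (A11*f2 - A12*f1) * p2 i)\<^sup>2)
     = (A11*A22 - A12\<^sup>2) * (A22*f1\<^sup>2 - 2*A12*f1*f2 + A11*f2\<^sup>2)"
proof -
  define \<alpha> where "\<alpha> = A22*f1 - A12*f2"
  define \<beta> where "\<beta> = A11*f2 - A12*f1"
  have "(\<Sum>i\<in>I. (\<alpha> * p1 i + \<beta> * p2 i)\<^sup>2)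
      = (\<Sum>i\<in>I. \<alpha>\<^sup>2 * (p1 i * p1 i) + 2*\<alpha>*\<beta> * (p1 i * p2 i) + \<beta>\<^sup>2 * (p2 i * p2 i))"
    by (rule sum.cong) (auto simp: power2_eq_square algebra_simps)
  also have "\<dots> = \<alpha>\<^sup>2 * A11 + 2*\<alpha>*\<beta>*A12 + \<beta>\<^sup>2*A22"
    by (simp add: assms sum.distrib sum_distrib_left)
  also have "\<dots> = (A11*A22 - A12\<^sup>2) * (A22*f1\<^sup>2 - 2*A12*f1*f2 + A11*f2\<^sup>2)"
    unfolding \<alpha>_def \<beta>_def by (simp add: power2_eq_square algebra_simps)
  finally show ?thesis unfolding \<alpha>_def \<beta>_def .
qed

lemma gram_adjugate_trace:
  fixes p1 p2 :: "'i \<Rightarrow> real"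
  assumes "A11 = (\<Sum>i\<in>I. p1 i * p1 i)" "A12 = (\<Sum>i\<in>I. p1 i * p2 i)" "A22 = (\<Sum>i\<in>I. p2 i * p2 i)"
  shows "(\<Sum>i\<in>I. A22 * (p1 i * p1 i) - 2 * A12 * (p1 i * p2 i) + A11 * (p2 i * p2 i))
     = 2 * (A11*A22 - A12\<^sup>2)"
proof -
  have "(\<Sum>i\<in>I. A22 * (p1 i * p1 i) - 2 * A12 * (p1 i * p2 i) + A11 * (p2 i * p2 i))
     = A22 * A11 - 2 * A12 * A12 + A11 * A22"
    by (simp only: sum.distrib sum_subtractf flip: sum_distrib_left assms)
  then show ?thesis by (simp add: power2_eq_square algebra_simps)
qed

lemma sum_log_sqrt_second_derivatives:
  fixes Qd Qdd :: "'i \<Rightarrow> real"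
  assumes "Q > 0"
  shows "(\<Sum>i\<in>I. - Qdd i / Q + (Qd i)\<^sup>2 / Q\<^sup>2 - K * (Qdd i / (2 * sqrt Q) - (Qd i)\<^sup>2 / (4 * Q * sqrt Q)))
     = ((\<Sum>i\<in>I. (Qd i)\<^sup>2) - Q * (\<Sum>i\<in>I. Qdd i)) / Q\<^sup>2
       - K * ((2 * Q * (\<Sum>i\<in>I. Qdd i) - (\<Sum>i\<in>I. (Qd i)\<^sup>2)) / (4 * Q * sqrt Q))"
proof -
  define W T where "W = (\<Sum>i\<in>I. (Qd i)\<^sup>2)" and "T = (\<Sum>i\<in>I. Qdd i)"
  have "(\<Sum>i\<in>I. - Qdd i / Q + (Qd i)\<^sup>2 / Q\<^sup>2 - K * (Qdd i / (2 * sqrt Q) - (Qd i)\<^sup>2 / (4 * Q * sqrt Q)))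
      = - T / Q + W / Q\<^sup>2 - K * (T / (2 * sqrt Q) - W / (4 * Q * sqrt Q))"
    unfolding W_def T_def
    by (simp add: sum.distrib sum_subtractf sum_negf flip: sum_distrib_left sum_divide_distrib)
  also have "\<dots> = (W - Q * T) / Q\<^sup>2 - K * ((2 * Q * T - W) / (4 * Q * sqrt Q))"
    using assms by (simp add: field_simps power2_eq_square)
  finally show ?thesis unfolding W_def T_def .
qed

text \<open>Here \<open>\<rho>\<close> stands for \<open>\<bar>f1\<bar> + \<bar>f2\<bar>\<close>, which is comparable to the distance from the zero set of
  \<open>(f1, f2)\<close>. The logarithm alone leaves an error of order \<open>1/\<rho>\<close> in the second derivatives; it is
  absorbed by \<open>-K \<surd>Q\<close>, whose second derivatives sum to about \<open>-K D/\<surd>Q\<close>.\<close>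

lemma log_sqrt_barrier_inequality:
  fixes a c d0 D Q W T \<rho> E1 E2 :: real
  assumes pos: "0 < a" "0 < c" "0 < d0" "0 < \<rho>" "0 \<le> E1" "0 \<le> E2"
    and D: "d0 \<le> D" and Q: "c * \<rho>\<^sup>2 \<le> Q" "Q \<le> a * \<rho>\<^sup>2"
    and W: "\<bar>W - 4 * D * Q\<bar> \<le> E1 * \<rho> ^ 3" and T: "\<bar>T - 4 * D\<bar> \<le> E2 * \<rho>"
  defines "K \<equiv> (E1 + a * E2) * sqrt a / (c\<^sup>2 * d0)"
  shows "(W - Q * T) / Q\<^sup>2 - K * ((2 * Q * T - W) / (4 * Q * sqrt Q))
    \<le> K * (2 * a * E2 + E1) / (4 * c * sqrt c)"
proof -
  have Qpos: "0 < Q" using Q pos by (smt (verit) mult_pos_pos zero_less_power)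
  have K: "0 \<le> K" unfolding K_def using pos by simp
  have "\<bar>Q * (T - 4 * D)\<bar> \<le> (a * \<rho>\<^sup>2) * (E2 * \<rho>)"
    using Q Qpos T by (intro abs_mult_mono) auto
  then have QT: "\<bar>Q * (T - 4 * D)\<bar> \<le> a * E2 * \<rho> ^ 3"
    by (simp add: power2_eq_square power3_eq_cube mult_ac)
  have "W - Q * T \<le> (E1 + a * E2) * \<rho> ^ 3"
    using W QT by (simp add: abs_le_iff algebra_simps)
  then have "(W - Q * T) / Q\<^sup>2 \<le> (E1 + a * E2) * \<rho> ^ 3 / (c * \<rho>\<^sup>2)\<^sup>2"
    using Q Qpos pos
    by (intro frac_le power_mono mult_nonneg_nonneg add_nonneg_nonneg) auto
  also have "\<dots> = K * (d0 / (sqrt a * \<rho>))"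
    using pos by (simp add: K_def field_simps power2_eq_square power3_eq_cube)
  finally have first: "(W - Q * T) / Q\<^sup>2 \<le> K * (d0 / (sqrt a * \<rho>))" .
  have "sqrt c * \<rho> \<le> sqrt Q" "sqrt Q \<le> sqrt a * \<rho>"
    using Q pos real_sqrt_le_mono by (fastforce simp: real_sqrt_mult)+
  moreover have "(c * \<rho>\<^sup>2) * (sqrt c * \<rho>) \<le> Q * sqrt Q"
    using calculation(1) Q pos Qpos by (intro mult_mono) auto
  ultimately have "d0 / (sqrt a * \<rho>) \<le> D / sqrt Q" and "(c * sqrt c) * \<rho> ^ 3 \<le> Q * sqrt Q"
    using D pos Qpos by (auto intro!: frac_le simp: power2_eq_square power3_eq_cube mult_ac)
  moreover from this(2) have "\<rho> ^ 3 / (Q * sqrt Q) \<le> 1 / (c * sqrt c)"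
    using pos Qpos by (simp add: field_simps)
  then have "(2 * a * E2 + E1) / 4 * (\<rho> ^ 3 / (Q * sqrt Q)) \<le> (2 * a * E2 + E1) / 4 * (1 / (c * sqrt c))"
    using pos by (intro mult_left_mono) auto
  ultimately have "d0 / (sqrt a * \<rho>) - (2 * a * E2 + E1) / (4 * c * sqrt c)
      \<le> D / sqrt Q - (2 * a * E2 + E1) * \<rho> ^ 3 / (4 * Q * sqrt Q)"
    by (simp add: field_simps)
  also have "\<dots> = (4 * D * Q - (2 * a * E2 + E1) * \<rho> ^ 3) / (4 * Q * sqrt Q)"
    using Qpos by (simp add: field_simps)
  also have "\<dots> \<le> (2 * Q * T - W) / (4 * Q * sqrt Q)"
  proof (rule divide_right_mono)
    show "4 * D * Q - (2 * a * E2 + E1) * \<rho> ^ 3 \<le> 2 * Q * T - W"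
      using W QT by (simp add: abs_le_iff algebra_simps)
  qed (use Qpos in simp)
  finally have "K * (d0 / (sqrt a * \<rho>)) - K * (2 * a * E2 + E1) / (4 * c * sqrt c)
      \<le> K * ((2 * Q * T - W) / (4 * Q * sqrt Q))"
    using K by (auto dest: mult_left_mono[of _ _ K] simp: right_diff_distrib)
  then show ?thesis
    using first by linarith
qed

text \<open>The constants of the estimate, for data bounded by \<open>\<Lambda>\<close> in \<open>n\<close> directions and a Gram
  determinant at least \<open>d\<close>.\<close>

definition gram_bound :: "real \<Rightarrow> nat \<Rightarrow> real" where
  "gram_bound \<Lambda> n = (real n + 1) * \<Lambda>\<^sup>2"

definition adj_form_lower :: "real \<Rightarrow> real \<Rightarrow> nat \<Rightarrow> real" where
  "adj_form_lower \<Lambda> d n = d / (4 * gram_bound \<Lambda> n)"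

definition grad_error :: "real \<Rightarrow> nat \<Rightarrow> real" where
  "grad_error \<Lambda> n = real n * (10 * gram_bound \<Lambda> n * \<Lambda>\<^sup>2)"

definition trace_error :: "real \<Rightarrow> nat \<Rightarrow> real" where
  "trace_error \<Lambda> n = real n * (14 * gram_bound \<Lambda> n * \<Lambda>)"

definition barrier_K :: "real \<Rightarrow> real \<Rightarrow> nat \<Rightarrow> real" where
  "barrier_K \<Lambda> d n = (grad_error \<Lambda> n + gram_bound \<Lambda> n * trace_error \<Lambda> n)
     * sqrt (gram_bound \<Lambda> n) / ((adj_form_lower \<Lambda> d n)\<^sup>2 * d)"

definition barrier_C :: "real \<Rightarrow> real \<Rightarrow> nat \<Rightarrow> real" where
  "barrier_C \<Lambda> d n = barrier_K \<Lambda> d n * (2 * gram_bound \<Lambda> n * trace_error \<Lambda> n + grad_error \<Lambda> n)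
     / (4 * adj_form_lower \<Lambda> d n * sqrt (adj_form_lower \<Lambda> d n))"

lemma gram_bound_ge:
  assumes "1 \<le> \<Lambda>"
  shows "\<Lambda>\<^sup>2 \<le> gram_bound \<Lambda> n" "\<Lambda> \<le> gram_bound \<Lambda> n"
proof -
  show "\<Lambda>\<^sup>2 \<le> gram_bound \<Lambda> n"
    by (simp add: gram_bound_def mult_le_cancel_right1)
  moreover have "\<Lambda> \<le> \<Lambda>\<^sup>2"
    using assms by (simp add: power2_eq_square)
  ultimately show "\<Lambda> \<le> gram_bound \<Lambda> n" by linarith
qed

lemma barrier_K_nonneg: "1 \<le> \<Lambda> \<Longrightarrow> 0 < d \<Longrightarrow> 0 \<le> barrier_K \<Lambda> d n"
  using gram_bound_ge[of \<Lambda> n]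
  by (simp add: barrier_K_def grad_error_def trace_error_def adj_form_lower_def)

context
  fixes I :: "'i set" and n :: nat and \<Lambda> d0 f1 f2 A11 A12 A22 :: real and p1 p2 :: "'i \<Rightarrow> real"
  assumes card: "card I = n" and \<Lambda>: "1 \<le> \<Lambda>" "\<bar>f1\<bar> \<le> \<Lambda>" "\<bar>f2\<bar> \<le> \<Lambda>"
    and p: "\<And>i. i \<in> I \<Longrightarrow> \<bar>p1 i\<bar> \<le> \<Lambda> \<and> \<bar>p2 i\<bar> \<le> \<Lambda>"
    and A: "A11 = (\<Sum>i\<in>I. p1 i * p1 i)" "A12 = (\<Sum>i\<in>I. p1 i * p2 i)" "A22 = (\<Sum>i\<in>I. p2 i * p2 i)"
    and d0: "0 < d0" "d0 \<le> A11 * A22 - A12\<^sup>2"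
begin

lemma gram_entries_le: "\<bar>A11\<bar> \<le> gram_bound \<Lambda> n" "\<bar>A12\<bar> \<le> gram_bound \<Lambda> n" "\<bar>A22\<bar> \<le> gram_bound \<Lambda> n"
proof -
  have "\<bar>\<Sum>i\<in>I. x i * y i\<bar> \<le> gram_bound \<Lambda> n"
    if "\<And>i. i \<in> I \<Longrightarrow> \<bar>x i\<bar> \<le> \<Lambda> \<and> \<bar>y i\<bar> \<le> \<Lambda>" for x y :: "'i \<Rightarrow> real"
  proof -
    have "\<bar>\<Sum>i\<in>I. x i * y i\<bar> \<le> real n * (\<Lambda> * \<Lambda>)"
      using abs_sum_le_card_mult[of I "\<lambda>i. x i * y i"] that card by (auto intro: abs_mult_mono)
    also have "\<dots> \<le> gram_bound \<Lambda> n"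
      by (simp add: gram_bound_def power2_eq_square mult_right_mono)
    finally show ?thesis .
  qed
  then show "\<bar>A11\<bar> \<le> gram_bound \<Lambda> n" "\<bar>A12\<bar> \<le> gram_bound \<Lambda> n" "\<bar>A22\<bar> \<le> gram_bound \<Lambda> n"
    unfolding A using p by auto
qed

lemma adj_form_bounds:
  shows "adj_form_lower \<Lambda> d0 n * (\<bar>f1\<bar> + \<bar>f2\<bar>)\<^sup>2 \<le> A22*f1\<^sup>2 - 2*A12*f1*f2 + A11*f2\<^sup>2"
    and "A22*f1\<^sup>2 - 2*A12*f1*f2 + A11*f2\<^sup>2 \<le> gram_bound \<Lambda> n * (\<bar>f1\<bar> + \<bar>f2\<bar>)\<^sup>2"
proof -
  define a Q D where "a = gram_bound \<Lambda> n" and "Q = A22*f1\<^sup>2 - 2*A12*f1*f2 + A11*f2\<^sup>2"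
    and "D = A11 * A22 - A12\<^sup>2"
  have a: "0 < a" using gram_bound_ge[OF \<Lambda>(1), of n] \<Lambda>(1) unfolding a_def by simp
  have A_nonneg: "0 \<le> A11" "0 \<le> A22" unfolding A by (auto intro: sum_nonneg)
  have "(A11 + A22) * Q - D * (f1\<^sup>2 + f2\<^sup>2) = (A22*f1 - A12*f2)\<^sup>2 + (A11*f2 - A12*f1)\<^sup>2"
    unfolding Q_def D_def by (simp add: power2_eq_square algebra_simps)
  then have "D * (f1\<^sup>2 + f2\<^sup>2) \<le> (A11 + A22) * Q"
    by (smt (verit) zero_le_power2)
  moreover have "d0 * (\<bar>f1\<bar> + \<bar>f2\<bar>)\<^sup>2 / 2 \<le> D * (f1\<^sup>2 + f2\<^sup>2)"
  proof -
    have "(\<bar>f1\<bar> + \<bar>f2\<bar>)\<^sup>2 \<le> 2 * (f1\<^sup>2 + f2\<^sup>2)"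
      using zero_le_power2[of "\<bar>f1\<bar> - \<bar>f2\<bar>"] by (simp add: power2_eq_square algebra_simps)
    then have "d0 * (\<bar>f1\<bar> + \<bar>f2\<bar>)\<^sup>2 \<le> d0 * (2 * (f1\<^sup>2 + f2\<^sup>2))"
      using d0 by (intro mult_left_mono) auto
    moreover have "d0 * (f1\<^sup>2 + f2\<^sup>2) \<le> D * (f1\<^sup>2 + f2\<^sup>2)"
      using d0 unfolding D_def by (intro mult_right_mono) auto
    ultimately show ?thesis by linarith
  qed
  moreover have "0 < A11 + A22"
  proof (rule ccontr)
    assume "\<not> 0 < A11 + A22"
    then have "A11 = 0" using A_nonneg by linarith
    then show False using d0 zero_le_power2[of A12] by simp
  qed
  ultimately have "d0 * (\<bar>f1\<bar> + \<bar>f2\<bar>)\<^sup>2 / 2 \<le> (A11 + A22) * Q" "0 \<le> Q"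
    using d0(1) by (simp_all add: zero_le_mult_iff) (smt (verit) zero_le_mult_iff zero_le_power2)
  moreover have "(A11 + A22) * Q \<le> 2 * a * Q"
    using gram_entries_le \<open>0 \<le> Q\<close> unfolding a_def by (intro mult_right_mono) auto
  ultimately show "adj_form_lower \<Lambda> d0 n * (\<bar>f1\<bar> + \<bar>f2\<bar>)\<^sup>2 \<le> Q"
    using a by (simp add: adj_form_lower_def a_def[symmetric] field_simps)
  show "Q \<le> gram_bound \<Lambda> n * (\<bar>f1\<bar> + \<bar>f2\<bar>)\<^sup>2"
    using quadratic_form_abs_le[of A22 "gram_bound \<Lambda> n" "- A12" A11 f1 f2] gram_entries_le
    unfolding Q_def by simp
qed

lemma adj_form_first_derivatives:
  fixes n11 n12 n22 :: "'i \<Rightarrow> real"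
  assumes n: "\<And>i. i \<in> I \<Longrightarrow> \<bar>n11 i\<bar> \<le> \<Lambda> \<and> \<bar>n12 i\<bar> \<le> \<Lambda> \<and> \<bar>n22 i\<bar> \<le> \<Lambda>"
  shows "\<bar>(\<Sum>i\<in>I. (n11 i * f1\<^sup>2 + 2 * n12 i * f1 * f2 + n22 i * f2\<^sup>2
            + 2 * ((A22*f1 - A12*f2) * p1 i + (A11*f2 - A12*f1) * p2 i))\<^sup>2)
         - 4 * (A11*A22 - A12\<^sup>2) * (A22*f1\<^sup>2 - 2*A12*f1*f2 + A11*f2\<^sup>2)\<bar>
    \<le> grad_error \<Lambda> n * (\<bar>f1\<bar> + \<bar>f2\<bar>) ^ 3"
proof -
  define a \<rho> where "a = gram_bound \<Lambda> n" and "\<rho> = \<bar>f1\<bar> + \<bar>f2\<bar>"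
  define L where "L i = (A22*f1 - A12*f2) * p1 i + (A11*f2 - A12*f1) * p2 i" for i
  define R where "R i = n11 i * f1\<^sup>2 + 2 * n12 i * f1 * f2 + n22 i * f2\<^sup>2" for i
  have \<rho>: "0 \<le> \<rho>" "\<rho> \<le> 2 * a"
    using \<Lambda> gram_bound_ge[OF \<Lambda>(1), of n] by (auto simp: \<rho>_def a_def)
  have "\<bar>(R i + 2 * L i)\<^sup>2 - 4 * (L i)\<^sup>2\<bar> \<le> 10 * (a * \<Lambda>\<^sup>2 * \<rho> ^ 3)" if i: "i \<in> I" for i
  proof -
    have L: "\<bar>L i\<bar> \<le> 2 * a * \<Lambda> * \<rho>"
      using bilinear_form_abs_le[of A22 a "- A12" A11 "p1 i" \<Lambda> "p2 i" f1 f2] gram_entries_le p[OF i]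
      by (simp add: L_def a_def \<rho>_def algebra_simps)
    have R: "\<bar>R i\<bar> \<le> \<Lambda> * \<rho>\<^sup>2"
      using quadratic_form_abs_le n[OF i] by (simp add: R_def \<rho>_def)
    have "(\<Lambda>\<^sup>2 * \<rho> ^ 3) * \<rho> \<le> (\<Lambda>\<^sup>2 * \<rho> ^ 3) * (2 * a)"
      using \<rho> by (intro mult_left_mono) auto
    then have "\<bar>R i * R i\<bar> \<le> 2 * (a * \<Lambda>\<^sup>2 * \<rho> ^ 3)"
      using abs_mult_mono[OF R R] by (simp add: power2_eq_square power3_eq_cube mult_ac)
    moreover have "\<bar>R i * L i\<bar> \<le> 2 * (a * \<Lambda>\<^sup>2 * \<rho> ^ 3)"
      using abs_mult_mono[OF R L] by (simp add: power2_eq_square power3_eq_cube mult_ac)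
    moreover have "(R i + 2 * L i)\<^sup>2 - 4 * (L i)\<^sup>2 = R i * R i + 4 * (R i * L i)"
      by (simp add: power2_eq_square algebra_simps)
    ultimately show ?thesis
      by (simp only: abs_le_iff) linarith
  qed
  then have "\<bar>\<Sum>i\<in>I. (R i + 2 * L i)\<^sup>2 - 4 * (L i)\<^sup>2\<bar> \<le> real (card I) * (10 * (a * \<Lambda>\<^sup>2 * \<rho> ^ 3))"
    by (rule abs_sum_le_card_mult)
  moreover define D Q where "D = A11*A22 - A12\<^sup>2" and "Q = A22*f1\<^sup>2 - 2*A12*f1*f2 + A11*f2\<^sup>2"
  have "(\<Sum>i\<in>I. (L i)\<^sup>2) = D * Q"
    unfolding L_def D_def Q_def by (rule gram_adjugate_sum_squares[OF A])
  ultimately have "\<bar>(\<Sum>i\<in>I. (R i + 2 * L i)\<^sup>2) - 4 * D * Q\<bar> \<le> grad_error \<Lambda> n * \<rho> ^ 3"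
    by (simp add: sum_subtractf card grad_error_def a_def mult_ac flip: sum_distrib_left)
  from this[unfolded R_def L_def \<rho>_def D_def Q_def] show ?thesis .
qed

lemma adj_form_second_derivatives:
  fixes h1 h2 n11 n12 n22 nn11 nn12 nn22 :: "'i \<Rightarrow> real"
  assumes n: "\<And>i. i \<in> I \<Longrightarrow> \<bar>n11 i\<bar> \<le> \<Lambda> \<and> \<bar>n12 i\<bar> \<le> \<Lambda> \<and> \<bar>n22 i\<bar> \<le> \<Lambda>
      \<and> \<bar>nn11 i\<bar> \<le> \<Lambda> \<and> \<bar>nn12 i\<bar> \<le> \<Lambda> \<and> \<bar>nn22 i\<bar> \<le> \<Lambda>"
    and h: "\<And>i. i \<in> I \<Longrightarrow> \<bar>h1 i\<bar> \<le> \<Lambda> \<and> \<bar>h2 i\<bar> \<le> \<Lambda>"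
  shows "\<bar>(\<Sum>i\<in>I. nn11 i * f1\<^sup>2 + 2 * nn12 i * f1 * f2 + nn22 i * f2\<^sup>2
            + 4 * (n11 i * f1 * p1 i + n12 i * (p1 i * f2 + f1 * p2 i) + n22 i * f2 * p2 i)
            + 2 * (A22 * f1 * h1 i - A12 * (h1 i * f2 + f1 * h2 i) + A11 * f2 * h2 i)
            + 2 * (A22 * (p1 i * p1 i) - 2 * A12 * (p1 i * p2 i) + A11 * (p2 i * p2 i)))
         - 4 * (A11*A22 - A12\<^sup>2)\<bar>
    \<le> trace_error \<Lambda> n * (\<bar>f1\<bar> + \<bar>f2\<bar>)"
proof -
  define a \<rho> where "a = gram_bound \<Lambda> n" and "\<rho> = \<bar>f1\<bar> + \<bar>f2\<bar>"
  define S where "S i = nn11 i * f1\<^sup>2 + 2 * nn12 i * f1 * f2 + nn22 i * f2\<^sup>2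
            + 4 * (n11 i * f1 * p1 i + n12 i * (p1 i * f2 + f1 * p2 i) + n22 i * f2 * p2 i)
            + 2 * (A22 * f1 * h1 i - A12 * (h1 i * f2 + f1 * h2 i) + A11 * f2 * h2 i)" for i
  have \<rho>: "0 \<le> \<rho>" "\<rho> \<le> 2 * \<Lambda>"
    using \<Lambda> by (auto simp: \<rho>_def)
  have a: "\<Lambda> \<le> a" using gram_bound_ge[OF \<Lambda>(1)] by (simp add: a_def)
  have "\<bar>S i\<bar> \<le> 14 * (a * \<Lambda> * \<rho>)" if i: "i \<in> I" for i
  proof -
    define x y z where "x = nn11 i * f1\<^sup>2 + 2 * nn12 i * f1 * f2 + nn22 i * f2\<^sup>2"
      and "y = n11 i * f1 * p1 i + n12 i * (p1 i * f2 + f1 * p2 i) + n22 i * f2 * p2 i"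
      and "z = A22 * f1 * h1 i - A12 * (h1 i * f2 + f1 * h2 i) + A11 * f2 * h2 i"
    have "S i = x + 4 * y + 2 * z"
      unfolding S_def x_def y_def z_def ..
    moreover have "\<bar>x\<bar> \<le> \<Lambda> * \<rho>\<^sup>2"
      using quadratic_form_abs_le n[OF i] by (simp add: x_def \<rho>_def)
    moreover have "\<bar>y\<bar> \<le> 2 * (\<Lambda> * \<Lambda> * \<rho>)"
      using bilinear_form_abs_le[of "n11 i" \<Lambda> "n12 i" "n22 i" "p1 i" \<Lambda> "p2 i" f1 f2] n[OF i] p[OF i]
      by (simp add: y_def \<rho>_def mult_ac)
    moreover have "\<bar>z\<bar> \<le> 2 * (a * \<Lambda> * \<rho>)"
      using bilinear_form_abs_le[of A22 a "- A12" A11 "h1 i" \<Lambda> "h2 i" f1 f2] gram_entries_le h[OF i]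
      by (simp add: z_def a_def \<rho>_def algebra_simps)
    moreover have "\<rho> * \<rho> \<le> (2 * a) * \<rho>"
      using \<rho> a by (intro mult_right_mono) auto
    then have "\<Lambda> * \<rho>\<^sup>2 \<le> 2 * (a * \<Lambda> * \<rho>)"
      using \<Lambda>(1) mult_left_mono[of "\<rho> * \<rho>" "2 * a * \<rho>" \<Lambda>] by (simp add: power2_eq_square mult_ac)
    moreover have "\<Lambda> * \<Lambda> * \<rho> \<le> a * \<Lambda> * \<rho>"
      using \<rho> a \<Lambda>(1) by (intro mult_right_mono) auto
    ultimately show ?thesis
      by (simp only: abs_le_iff) linarith
  qed
  then have "\<bar>\<Sum>i\<in>I. S i\<bar> \<le> real (card I) * (14 * (a * \<Lambda> * \<rho>))"
    by (rule abs_sum_le_card_mult)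
  then have "\<bar>\<Sum>i\<in>I. S i\<bar> \<le> trace_error \<Lambda> n * \<rho>"
    by (simp add: card trace_error_def a_def mult_ac)
  moreover define T where "T i = A22 * (p1 i * p1 i) - 2 * A12 * (p1 i * p2 i) + A11 * (p2 i * p2 i)" for i
  have "(\<Sum>i\<in>I. S i + 2 * T i) - 4 * (A11*A22 - A12\<^sup>2) = (\<Sum>i\<in>I. S i)"
    using gram_adjugate_trace[OF A] unfolding T_def[symmetric]
    by (simp add: sum.distrib flip: sum_distrib_left)
  ultimately have "\<bar>(\<Sum>i\<in>I. S i + 2 * T i) - 4 * (A11*A22 - A12\<^sup>2)\<bar> \<le> trace_error \<Lambda> n * \<rho>"
    by simp
  from this[unfolded S_def T_def \<rho>_def] show ?thesis .
qed

lemma log_sqrt_barrier_estimate: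
  fixes h1 h2 n11 n12 n22 nn11 nn12 nn22 Qd Qdd :: "'i \<Rightarrow> real"
  assumes n: "\<And>i. i \<in> I \<Longrightarrow> \<bar>n11 i\<bar> \<le> \<Lambda> \<and> \<bar>n12 i\<bar> \<le> \<Lambda> \<and> \<bar>n22 i\<bar> \<le> \<Lambda>
      \<and> \<bar>nn11 i\<bar> \<le> \<Lambda> \<and> \<bar>nn12 i\<bar> \<le> \<Lambda> \<and> \<bar>nn22 i\<bar> \<le> \<Lambda>"
    and h: "\<And>i. i \<in> I \<Longrightarrow> \<bar>h1 i\<bar> \<le> \<Lambda> \<and> \<bar>h2 i\<bar> \<le> \<Lambda>"
    and nz: "f1 \<noteq> 0 \<or> f2 \<noteq> 0"
    and Q: "Q = A22*f1\<^sup>2 - 2*A12*f1*f2 + A11*f2\<^sup>2"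
    and Qd: "\<And>i. Qd i = n11 i * f1\<^sup>2 + 2 * n12 i * f1 * f2 + n22 i * f2\<^sup>2
               + 2 * ((A22*f1 - A12*f2) * p1 i + (A11*f2 - A12*f1) * p2 i)"
    and Qdd: "\<And>i. Qdd i = nn11 i * f1\<^sup>2 + 2 * nn12 i * f1 * f2 + nn22 i * f2\<^sup>2
               + 4 * (n11 i * f1 * p1 i + n12 i * (p1 i * f2 + f1 * p2 i) + n22 i * f2 * p2 i)
               + 2 * (A22 * f1 * h1 i - A12 * (h1 i * f2 + f1 * h2 i) + A11 * f2 * h2 i)
               + 2 * (A22 * (p1 i * p1 i) - 2 * A12 * (p1 i * p2 i) + A11 * (p2 i * p2 i))"
  shows "0 < Q"
    and "(\<Sum>i\<in>I. - Qdd i / Q + (Qd i)\<^sup>2 / Q\<^sup>2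
            - barrier_K \<Lambda> d0 n * (Qdd i / (2 * sqrt Q) - (Qd i)\<^sup>2 / (4 * Q * sqrt Q)))
         \<le> barrier_C \<Lambda> d0 n"
proof -
  define \<rho> where "\<rho> = \<bar>f1\<bar> + \<bar>f2\<bar>"
  have \<rho>: "0 < \<rho>" using nz by (auto simp: \<rho>_def)
  have a: "0 < gram_bound \<Lambda> n"
    using gram_bound_ge[OF \<Lambda>(1)] \<Lambda>(1) by (smt (verit))
  then have c: "0 < adj_form_lower \<Lambda> d0 n"
    using d0 by (simp add: adj_form_lower_def)
  have Qb: "adj_form_lower \<Lambda> d0 n * \<rho>\<^sup>2 \<le> Q" "Q \<le> gram_bound \<Lambda> n * \<rho>\<^sup>2"
    using adj_form_bounds unfolding Q \<rho>_def by simp_all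
  show "0 < Q"
    using Qb(1) c \<rho> by (smt (verit) mult_pos_pos zero_less_power)
  have E: "0 \<le> grad_error \<Lambda> n" "0 \<le> trace_error \<Lambda> n"
    using a \<Lambda>(1) by (simp_all add: grad_error_def trace_error_def)
  have W: "\<bar>(\<Sum>i\<in>I. (Qd i)\<^sup>2) - 4 * (A11*A22 - A12\<^sup>2) * Q\<bar> \<le> grad_error \<Lambda> n * \<rho> ^ 3"
    using adj_form_first_derivatives[of n11 n12 n22] n unfolding Qd Q \<rho>_def by blast
  have T: "\<bar>(\<Sum>i\<in>I. Qdd i) - 4 * (A11*A22 - A12\<^sup>2)\<bar> \<le> trace_error \<Lambda> n * \<rho>"
    using adj_form_second_derivatives[of n11 n12 n22 nn11 nn12 nn22 h1 h2] n h
    unfolding Qdd \<rho>_def by blast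
  show "(\<Sum>i\<in>I. - Qdd i / Q + (Qd i)\<^sup>2 / Q\<^sup>2
            - barrier_K \<Lambda> d0 n * (Qdd i / (2 * sqrt Q) - (Qd i)\<^sup>2 / (4 * Q * sqrt Q)))
         \<le> barrier_C \<Lambda> d0 n"
    unfolding sum_log_sqrt_second_derivatives[OF \<open>0 < Q\<close>] barrier_C_def barrier_K_def
    by (rule log_sqrt_barrier_inequality[OF a c d0(1) \<rho> E d0(2) Qb W T])
qed

end

section \<open>The barrier of a pair of defining functions\<close>

definition grad_inner :: "('a::euclidean_space \<Rightarrow> real) \<Rightarrow> ('a \<Rightarrow> real) \<Rightarrow> 'a \<Rightarrow> real" where
  "grad_inner g h y = (\<Sum>e\<in>Basis. partial g e y * partial h e y)"

definition grad_inner_deriv :: "('a::euclidean_space \<Rightarrow> real) \<Rightarrow> ('a \<Rightarrow> real) \<Rightarrow> 'a \<Rightarrow> 'a \<Rightarrow> real" where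
  "grad_inner_deriv g h i y =
     (\<Sum>e\<in>Basis. partial (partial g e) i y * partial h e y + partial g e y * partial (partial h e) i y)"

definition grad_inner_deriv2 :: "('a::euclidean_space \<Rightarrow> real) \<Rightarrow> ('a \<Rightarrow> real) \<Rightarrow> 'a \<Rightarrow> 'a \<Rightarrow> real" where
  "grad_inner_deriv2 g h i y =
     (\<Sum>e\<in>Basis. partial (partial (partial g e) i) i y * partial h e y
        + 2 * (partial (partial g e) i y * partial (partial h e) i y)
        + partial g e y * partial (partial (partial h e) i) i y)"

text \<open>The quadratic form of the adjugate of the Gram matrix of \<open>\<nabla>f1, \<nabla>f2\<close>, evaluated at
  \<open>(f1, f2)\<close>. It vanishes exactly where \<open>f1\<close> and \<open>f2\<close> do and is comparable to the squared
  distance from that set.\<close>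

definition adj_form :: "('a::euclidean_space \<Rightarrow> real) \<Rightarrow> ('a \<Rightarrow> real) \<Rightarrow> 'a \<Rightarrow> real" where
  "adj_form f1 f2 y = grad_inner f2 f2 y * (f1 y)\<^sup>2 - 2 * grad_inner f1 f2 y * f1 y * f2 y
     + grad_inner f1 f1 y * (f2 y)\<^sup>2"

definition adj_form_deriv :: "('a::euclidean_space \<Rightarrow> real) \<Rightarrow> ('a \<Rightarrow> real) \<Rightarrow> 'a \<Rightarrow> 'a \<Rightarrow> real" where
  "adj_form_deriv f1 f2 i y =
     grad_inner_deriv f2 f2 i y * (f1 y)\<^sup>2 + 2 * (- grad_inner_deriv f1 f2 i y) * f1 y * f2 y
     + grad_inner_deriv f1 f1 i y * (f2 y)\<^sup>2
     + 2 * ((grad_inner f2 f2 y * f1 y - grad_inner f1 f2 y * f2 y) * partial f1 i y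
       + (grad_inner f1 f1 y * f2 y - grad_inner f1 f2 y * f1 y) * partial f2 i y)"

definition adj_form_deriv2 :: "('a::euclidean_space \<Rightarrow> real) \<Rightarrow> ('a \<Rightarrow> real) \<Rightarrow> 'a \<Rightarrow> 'a \<Rightarrow> real" where
  "adj_form_deriv2 f1 f2 i y =
     grad_inner_deriv2 f2 f2 i y * (f1 y)\<^sup>2 + 2 * (- grad_inner_deriv2 f1 f2 i y) * f1 y * f2 y
     + grad_inner_deriv2 f1 f1 i y * (f2 y)\<^sup>2
     + 4 * (grad_inner_deriv f2 f2 i y * f1 y * partial f1 i y
       + (- grad_inner_deriv f1 f2 i y) * (partial f1 i y * f2 y + f1 y * partial f2 i y)
       + grad_inner_deriv f1 f1 i y * f2 y * partial f2 i y)
     + 2 * (grad_inner f2 f2 y * f1 y * partial (partial f1 i) i y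
       - grad_inner f1 f2 y * (partial (partial f1 i) i y * f2 y + f1 y * partial (partial f2 i) i y)
       + grad_inner f1 f1 y * f2 y * partial (partial f2 i) i y)
     + 2 * (grad_inner f2 f2 y * (partial f1 i y * partial f1 i y)
       - 2 * grad_inner f1 f2 y * (partial f1 i y * partial f2 i y)
       + grad_inner f1 f1 y * (partial f2 i y * partial f2 i y))"

definition log_sqrt_barrier :: "real \<Rightarrow> ('a::euclidean_space \<Rightarrow> real) \<Rightarrow> ('a \<Rightarrow> real) \<Rightarrow> 'a \<Rightarrow> real" where
  "log_sqrt_barrier K f1 f2 y = - ln (adj_form f1 f2 y) - K * sqrt (adj_form f1 f2 y)"

definition log_sqrt_barrier_deriv ::
  "real \<Rightarrow> ('a::euclidean_space \<Rightarrow> real) \<Rightarrow> ('a \<Rightarrow> real) \<Rightarrow> 'a \<Rightarrow> 'a \<Rightarrow> real" where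
  "log_sqrt_barrier_deriv K f1 f2 i y =
     - adj_form_deriv f1 f2 i y / adj_form f1 f2 y
     - K * (adj_form_deriv f1 f2 i y / (2 * sqrt (adj_form f1 f2 y)))"

definition log_sqrt_barrier_deriv2 ::
  "real \<Rightarrow> ('a::euclidean_space \<Rightarrow> real) \<Rightarrow> ('a \<Rightarrow> real) \<Rightarrow> 'a \<Rightarrow> 'a \<Rightarrow> real" where
  "log_sqrt_barrier_deriv2 K f1 f2 i y =
     - adj_form_deriv2 f1 f2 i y / adj_form f1 f2 y + (adj_form_deriv f1 f2 i y)\<^sup>2 / (adj_form f1 f2 y)\<^sup>2
     - K * (adj_form_deriv2 f1 f2 i y / (2 * sqrt (adj_form f1 f2 y))
       - (adj_form_deriv f1 f2 i y)\<^sup>2 / (4 * adj_form f1 f2 y * sqrt (adj_form f1 f2 y)))"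

lemma DERIV_line_grad_inner:
  assumes "Ck_on 3 U g" "Ck_on 3 U h" "i \<in> Basis" "y + t *\<^sub>R i \<in> U"
  shows "((\<lambda>s. grad_inner g h (y + s *\<^sub>R i)) has_real_derivative grad_inner_deriv g h i (y + t *\<^sub>R i)) (at t)"
  unfolding grad_inner_def grad_inner_deriv_def
  by (rule DERIV_sum, (rule derivative_eq_intros DERIV_line_partial
      Ck_on_3_differentiable[OF assms(1)] Ck_on_3_differentiable[OF assms(2)] | simp add: assms)+)

lemma DERIV_line_grad_inner_deriv:
  assumes "Ck_on 3 U g" "Ck_on 3 U h" "i \<in> Basis" "y + t *\<^sub>R i \<in> U"
  shows "((\<lambda>s. grad_inner_deriv g h i (y + s *\<^sub>R i)) has_real_derivative
      grad_inner_deriv2 g h i (y + t *\<^sub>R i)) (at t)"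
  unfolding grad_inner_deriv_def grad_inner_deriv2_def
  by (rule DERIV_sum, (rule derivative_eq_intros DERIV_line_partial
      Ck_on_3_differentiable[OF assms(1)] Ck_on_3_differentiable[OF assms(2)] | simp add: assms)+)

lemma DERIV_line_adj_form:
  assumes "Ck_on 3 U f1" "Ck_on 3 U f2" "i \<in> Basis" "y + t *\<^sub>R i \<in> U"
  shows "((\<lambda>s. adj_form f1 f2 (y + s *\<^sub>R i)) has_real_derivative adj_form_deriv f1 f2 i (y + t *\<^sub>R i)) (at t)"
  unfolding adj_form_def adj_form_deriv_def
  by ((rule derivative_eq_intros DERIV_line_grad_inner[OF assms(1) assms(1)]
      DERIV_line_grad_inner[OF assms(1) assms(2)] DERIV_line_grad_inner[OF assms(2) assms(2)]
      DERIV_line_partial Ck_on_3_differentiable[OF assms(1)] Ck_on_3_differentiable[OF assms(2)]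
      | simp add: assms)+, simp add: algebra_simps power2_eq_square)

lemma DERIV_line_adj_form_deriv:
  assumes "Ck_on 3 U f1" "Ck_on 3 U f2" "i \<in> Basis" "y + t *\<^sub>R i \<in> U"
  shows "((\<lambda>s. adj_form_deriv f1 f2 i (y + s *\<^sub>R i)) has_real_derivative
      adj_form_deriv2 f1 f2 i (y + t *\<^sub>R i)) (at t)"
  unfolding adj_form_deriv_def adj_form_deriv2_def
  by ((rule derivative_eq_intros DERIV_line_grad_inner[OF assms(1) assms(1)]
      DERIV_line_grad_inner[OF assms(1) assms(2)] DERIV_line_grad_inner[OF assms(2) assms(2)]
      DERIV_line_grad_inner_deriv[OF assms(1) assms(1)] DERIV_line_grad_inner_deriv[OF assms(1) assms(2)]
      DERIV_line_grad_inner_deriv[OF assms(2) assms(2)]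
      DERIV_line_partial Ck_on_3_differentiable[OF assms(1)] Ck_on_3_differentiable[OF assms(2)]
      | simp add: assms)+, simp add: algebra_simps power2_eq_square)

lemma DERIV_neg_ln_minus_sqrt:
  fixes q :: "real \<Rightarrow> real"
  assumes "(q has_real_derivative q') (at t)" "0 < q t"
  shows "((\<lambda>s. - ln (q s) - K * sqrt (q s)) has_real_derivative
      - q' / q t - K * (q' / (2 * sqrt (q t)))) (at t)"
  using assms by (auto intro!: derivative_eq_intros simp: field_simps)

lemma DERIV_neg_ln_minus_sqrt_deriv:
  fixes q q' :: "real \<Rightarrow> real"
  assumes "(q has_real_derivative q' t) (at t)" "(q' has_real_derivative q'') (at t)" "0 < q t"
  shows "((\<lambda>s. - q' s / q s - K * (q' s / (2 * sqrt (q s)))) has_real_derivative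
     - q'' / q t + (q' t)\<^sup>2 / (q t)\<^sup>2
     - K * (q'' / (2 * sqrt (q t)) - (q' t)\<^sup>2 / (4 * q t * sqrt (q t)))) (at t)"
proof -
  have "sqrt (q t) * sqrt (q t) = q t" "0 < sqrt (q t)"
    using assms(3) by simp_all
  then show ?thesis
    using assms by (auto intro!: derivative_eq_intros simp: field_simps power2_eq_square)
qed

lemma DERIV_line_log_sqrt_barrier:
  assumes "Ck_on 3 U f1" "Ck_on 3 U f2" "i \<in> Basis" "y + t *\<^sub>R i \<in> U"
    and "0 < adj_form f1 f2 (y + t *\<^sub>R i)"
  shows "((\<lambda>s. log_sqrt_barrier K f1 f2 (y + s *\<^sub>R i)) has_real_derivative
      log_sqrt_barrier_deriv K f1 f2 i (y + t *\<^sub>R i)) (at t)"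
  unfolding log_sqrt_barrier_def log_sqrt_barrier_deriv_def
  by (rule DERIV_neg_ln_minus_sqrt[OF DERIV_line_adj_form[OF assms(1-4)] assms(5)])

lemma DERIV_line_log_sqrt_barrier_deriv:
  assumes "Ck_on 3 U f1" "Ck_on 3 U f2" "i \<in> Basis" "y + t *\<^sub>R i \<in> U"
    and "0 < adj_form f1 f2 (y + t *\<^sub>R i)"
  shows "((\<lambda>s. log_sqrt_barrier_deriv K f1 f2 i (y + s *\<^sub>R i)) has_real_derivative
      log_sqrt_barrier_deriv2 K f1 f2 i (y + t *\<^sub>R i)) (at t)"
  unfolding log_sqrt_barrier_deriv_def log_sqrt_barrier_deriv2_def
  by (rule DERIV_neg_ln_minus_sqrt_deriv[OF DERIV_line_adj_form[OF assms(1-4)]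
        DERIV_line_adj_form_deriv[OF assms(1-4)] assms(5)])

lemma continuous_on_grad_inner:
  assumes "Ck_on 3 U g" "Ck_on 3 U h"
  shows "continuous_on U (grad_inner g h)"
  unfolding grad_inner_def[abs_def]
  by (intro continuous_on_sum continuous_on_mult Ck_on_3_continuous[OF assms(1)]
      Ck_on_3_continuous[OF assms(2)])

lemma continuous_on_adj_form:
  assumes "Ck_on 3 U f1" "Ck_on 3 U f2"
  shows "continuous_on U (adj_form f1 f2)"
  unfolding adj_form_def[abs_def]
  by (intro continuous_intros continuous_on_grad_inner assms Ck_on_3_continuous(1)[OF assms(1)]
      Ck_on_3_continuous(1)[OF assms(2)])

definition partials_bounded :: "real \<Rightarrow> ('a::euclidean_space \<Rightarrow> real) \<Rightarrow> 'a \<Rightarrow> bool" where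
  "partials_bounded B g x \<longleftrightarrow> \<bar>g x\<bar> \<le> B \<and> (\<forall>e\<in>Basis. \<forall>i\<in>Basis. \<bar>partial g e x\<bar> \<le> B
     \<and> \<bar>partial (partial g e) i x\<bar> \<le> B \<and> \<bar>partial (partial (partial g e) i) i x\<bar> \<le> B)"

lemma partials_bounded_mono: "partials_bounded B g x \<Longrightarrow> B \<le> B' \<Longrightarrow> partials_bounded B' g x"
  unfolding partials_bounded_def by (meson order_trans)

lemma Ck_on_3_bounded_on_compact:
  fixes g :: "'a::euclidean_space \<Rightarrow> real"
  assumes "Ck_on 3 U g" "compact C" "C \<subseteq> U"
  obtains B where "0 \<le> B" "\<And>x. x \<in> C \<Longrightarrow> partials_bounded B g x"
proof -
  define K where "K e i = partial g e ` C \<union> partial (partial g e) i ` C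
    \<union> partial (partial (partial g e) i) i ` C" for e i
  have image_bounded: "bounded (f ` C)" if "continuous_on U f" for f :: "'a \<Rightarrow> real"
    using that assms(2,3) by (meson compact_continuous_image continuous_on_subset compact_imp_bounded)
  have "bounded (K e i)" if "e \<in> Basis" "i \<in> Basis" for e i :: 'a
    using Ck_on_3_continuous[OF assms(1)] image_bounded that by (simp add: K_def bounded_Un)
  then have "bounded (\<Union>e\<in>Basis. \<Union>i\<in>Basis. K e i)"
    by (intro bounded_UN finite_Basis ballI)
  then have "bounded (g ` C \<union> (\<Union>e\<in>Basis. \<Union>i\<in>Basis. K e i))"
    using image_bounded[OF Ck_on_3_continuous(1)[OF assms(1)]] by (simp only: bounded_Un)
  then obtain B where B: "0 < B" "\<forall>y\<in>g ` C \<union> (\<Union>e\<in>Basis. \<Union>i\<in>Basis. K e i). norm y \<le> B"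
    unfolding bounded_pos by blast
  show ?thesis
  proof (rule that[of B])
    show "0 \<le> B" using B(1) by simp
    fix x assume "x \<in> C"
    moreover have "\<forall>y\<in>K e i. \<bar>y\<bar> \<le> B" if "e \<in> Basis" "i \<in> Basis" for e i
      using B(2) that by auto
    ultimately show "partials_bounded B g x"
      using B(2) by (simp add: partials_bounded_def K_def)
  qed
qed

lemma grad_inner_deriv_bounds:
  fixes g h :: "'a::euclidean_space \<Rightarrow> real"
  assumes "partials_bounded B g x" "partials_bounded B h x" "i \<in> Basis"
  shows "\<bar>grad_inner_deriv g h i x\<bar> \<le> real DIM('a) * (2 * B\<^sup>2)"
    and "\<bar>grad_inner_deriv2 g h i x\<bar> \<le> real DIM('a) * (4 * B\<^sup>2)"
proof -
  have "\<bar>partial (partial g e) i x * partial h e x\<bar> \<le> B * B"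
    "\<bar>partial g e x * partial (partial h e) i x\<bar> \<le> B * B"
    "\<bar>partial (partial (partial g e) i) i x * partial h e x\<bar> \<le> B * B"
    "\<bar>partial g e x * partial (partial (partial h e) i) i x\<bar> \<le> B * B"
    "\<bar>partial (partial g e) i x * partial (partial h e) i x\<bar> \<le> B * B"
    if "e \<in> Basis" for e
    using assms that by (auto intro: abs_mult_mono simp: partials_bounded_def)
  then have bound1: "\<bar>partial (partial g e) i x * partial h e x + partial g e x * partial (partial h e) i x\<bar>
        \<le> 2 * B\<^sup>2"
    and bound2: "\<bar>partial (partial (partial g e) i) i x * partial h e x
        + 2 * (partial (partial g e) i x * partial (partial h e) i x)
        + partial g e x * partial (partial (partial h e) i) i x\<bar> \<le> 4 * B\<^sup>2"
    if "e \<in> Basis" for e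
    using that by (simp_all add: abs_le_iff power2_eq_square) (smt (verit))+
  show "\<bar>grad_inner_deriv g h i x\<bar> \<le> real DIM('a) * (2 * B\<^sup>2)"
    unfolding grad_inner_deriv_def by (rule abs_sum_le_card_mult bound1)+
  show "\<bar>grad_inner_deriv2 g h i x\<bar> \<le> real DIM('a) * (4 * B\<^sup>2)"
    unfolding grad_inner_deriv2_def by (rule abs_sum_le_card_mult bound2)+
qed

definition bounded_defining_pair ::
  "real \<Rightarrow> real \<Rightarrow> ('a::euclidean_space \<Rightarrow> real) \<Rightarrow> ('a \<Rightarrow> real) \<Rightarrow> 'a \<Rightarrow> bool" where
  "bounded_defining_pair \<Lambda> d0 f1 f2 y \<longleftrightarrow>
     \<bar>f1 y\<bar> \<le> \<Lambda> \<and> \<bar>f2 y\<bar> \<le> \<Lambda> \<and>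
     (\<forall>i\<in>Basis. \<bar>partial f1 i y\<bar> \<le> \<Lambda> \<and> \<bar>partial f2 i y\<bar> \<le> \<Lambda>
        \<and> \<bar>partial (partial f1 i) i y\<bar> \<le> \<Lambda> \<and> \<bar>partial (partial f2 i) i y\<bar> \<le> \<Lambda>) \<and>
     (\<forall>i\<in>Basis. \<bar>grad_inner_deriv f2 f2 i y\<bar> \<le> \<Lambda> \<and> \<bar>grad_inner_deriv f1 f2 i y\<bar> \<le> \<Lambda>
        \<and> \<bar>grad_inner_deriv f1 f1 i y\<bar> \<le> \<Lambda> \<and> \<bar>grad_inner_deriv2 f2 f2 i y\<bar> \<le> \<Lambda>
        \<and> \<bar>grad_inner_deriv2 f1 f2 i y\<bar> \<le> \<Lambda> \<and> \<bar>grad_inner_deriv2 f1 f1 i y\<bar> \<le> \<Lambda>) \<and>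
     d0 \<le> grad_inner f1 f1 y * grad_inner f2 f2 y - (grad_inner f1 f2 y)\<^sup>2"

lemma log_sqrt_barrier_deriv2_sum_le:
  fixes f1 f2 :: "'a::euclidean_space \<Rightarrow> real"
  assumes "1 \<le> \<Lambda>" "0 < d0" "bounded_defining_pair \<Lambda> d0 f1 f2 y" "f1 y \<noteq> 0 \<or> f2 y \<noteq> 0"
  shows "0 < adj_form f1 f2 y"
    and "(\<Sum>i\<in>Basis. log_sqrt_barrier_deriv2 (barrier_K \<Lambda> d0 DIM('a)) f1 f2 i y)
         \<le> barrier_C \<Lambda> d0 DIM('a)"
proof -
  note estimate = log_sqrt_barrier_estimate[where I=Basis and n="DIM('a)" and \<Lambda>=\<Lambda> and ?d0.0=d0
      and ?f1.0="f1 y" and ?f2.0="f2 y" and ?p1.0="\<lambda>i. partial f1 i y" and ?p2.0="\<lambda>i. partial f2 i y"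
      and ?h1.0="\<lambda>i. partial (partial f1 i) i y" and ?h2.0="\<lambda>i. partial (partial f2 i) i y"
      and ?n11.0="\<lambda>i. grad_inner_deriv f2 f2 i y" and ?n12.0="\<lambda>i. - grad_inner_deriv f1 f2 i y"
      and ?n22.0="\<lambda>i. grad_inner_deriv f1 f1 i y" and ?nn11.0="\<lambda>i. grad_inner_deriv2 f2 f2 i y"
      and ?nn12.0="\<lambda>i. - grad_inner_deriv2 f1 f2 i y" and ?nn22.0="\<lambda>i. grad_inner_deriv2 f1 f1 i y"
      and ?A11.0="grad_inner f1 f1 y" and ?A12.0="grad_inner f1 f2 y" and ?A22.0="grad_inner f2 f2 y"
      and Q="adj_form f1 f2 y" and Qd="\<lambda>i. adj_form_deriv f1 f2 i y"
      and Qdd="\<lambda>i. adj_form_deriv2 f1 f2 i y"]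
  show "0 < adj_form f1 f2 y"
    by (rule estimate(1))
      (use assms in \<open>simp_all add: bounded_defining_pair_def grad_inner_def adj_form_def
        adj_form_deriv_def adj_form_deriv2_def\<close>)
  show "(\<Sum>i\<in>Basis. log_sqrt_barrier_deriv2 (barrier_K \<Lambda> d0 DIM('a)) f1 f2 i y)
         \<le> barrier_C \<Lambda> d0 DIM('a)"
    unfolding log_sqrt_barrier_deriv2_def
    by (rule estimate(2))
      (use assms in \<open>simp_all add: bounded_defining_pair_def grad_inner_def adj_form_def
        adj_form_deriv_def adj_form_deriv2_def\<close>)
qed

section \<open>Defining functions of a submanifold of codimension two\<close>

lemma gram_det_pos_if_dual:
  fixes g1 g2 y1 y2 :: "'a::real_inner"
  assumes "y1 \<bullet> g1 = 1" "y1 \<bullet> g2 = 0" "y2 \<bullet> g2 = 1"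
  shows "0 < (g1 \<bullet> g1) * (g2 \<bullet> g2) - (g1 \<bullet> g2)\<^sup>2"
proof -
  have "\<bar>g1 \<bullet> g2\<bar> \<noteq> norm g1 * norm g2"
  proof
    assume "\<bar>g1 \<bullet> g2\<bar> = norm g1 * norm g2"
    then have "norm g1 *\<^sub>R g2 = norm g2 *\<^sub>R g1 \<or> norm g1 *\<^sub>R g2 = - norm g2 *\<^sub>R g1"
      by (simp add: norm_cauchy_schwarz_abs_eq)
    then have "y1 \<bullet> (norm g1 *\<^sub>R g2) = y1 \<bullet> (norm g2 *\<^sub>R g1) \<or> y1 \<bullet> (norm g1 *\<^sub>R g2) = y1 \<bullet> (- norm g2 *\<^sub>R g1)"
      by (elim disjE) simp_all
    then have "g2 = 0"
      using assms(1,2) by auto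
    then show False
      using assms(3) by simp
  qed
  then have "\<bar>g1 \<bullet> g2\<bar> < norm g1 * norm g2"
    using Cauchy_Schwarz_ineq2 order_le_neq_trans by blast
  then have "\<bar>g1 \<bullet> g2\<bar>\<^sup>2 < (norm g1 * norm g2)\<^sup>2"
    by (rule power_strict_mono) auto
  then show ?thesis
    by (simp add: power_mult_distrib power2_norm_eq_inner)
qed

lemma gram_det_pos_if_surj:
  fixes L :: "'a::euclidean_space \<Rightarrow> 'a"
  assumes "linear L" "surj L" "a \<in> Basis" "b \<in> Basis" "a \<noteq> b"
  shows "0 < (\<Sum>e\<in>Basis. (L e \<bullet> a) * (L e \<bullet> a)) * (\<Sum>e\<in>Basis. (L e \<bullet> b) * (L e \<bullet> b))
    - (\<Sum>e\<in>Basis. (L e \<bullet> a) * (L e \<bullet> b))\<^sup>2"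
proof -
  have adj: "adjoint L u \<bullet> e = L e \<bullet> u" for u e
    by (metis adjoint_works[OF assms(1)] inner_commute)
  have gram: "(\<Sum>e\<in>Basis. (L e \<bullet> u) * (L e \<bullet> v)) = adjoint L u \<bullet> adjoint L v" for u v
    by (subst euclidean_inner[of "adjoint L u" "adjoint L v"]) (simp only: adj)
  obtain y1 y2 where "L y1 = a" "L y2 = b"
    using assms(2) by (metis surjD)
  then have "y1 \<bullet> adjoint L a = 1" "y1 \<bullet> adjoint L b = 0" "y2 \<bullet> adjoint L b = 1"
    using assms by (simp_all add: adjoint_works inner_not_same_Basis)
  then show ?thesis
    unfolding gram by (rule gram_det_pos_if_dual)
qed

lemma smooth_diffeo_derivative_surj:
  assumes "smooth_diffeo U V \<phi>" "p \<in> U"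
  shows "\<phi> differentiable (at p)" and "surj (frechet_derivative \<phi> (at p))"
proof -
  obtain \<psi> where U: "open U" and "smooth_on U \<phi>" and V: "\<phi> ` U = V" "smooth_on V \<psi>"
    and inv: "\<forall>x\<in>U. \<psi> (\<phi> x) = x"
    using assms(1) unfolding smooth_diffeo_def by blast
  then have "Ck_on (Suc 0) U \<phi>" "Ck_on (Suc 0) V \<psi>"
    unfolding smooth_on_def by blast+
  then have d\<phi>: "\<phi> differentiable (at p)" and "\<psi> differentiable (at (\<phi> p))"
    using assms(2) V(1) by auto
  then show "\<phi> differentiable (at p)" by simp
  from d\<phi> \<open>\<psi> differentiable (at (\<phi> p))\<close> have "((\<lambda>x. \<psi> (\<phi> x)) has_derivative
      (\<lambda>h. frechet_derivative \<psi> (at (\<phi> p)) (frechet_derivative \<phi> (at p) h))) (at p)"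
    using has_derivative_compose[of \<phi> _ p UNIV \<psi>] by (simp add: frechet_derivative_works o_def)
  moreover have "((\<lambda>x. \<psi> (\<phi> x)) has_derivative (\<lambda>h. h)) (at p)"
    by (rule has_derivative_transform_within_open[OF has_derivative_ident U assms(2)]) (use inv in auto)
  ultimately have "frechet_derivative \<psi> (at (\<phi> p)) (frechet_derivative \<phi> (at p) h) = h" for h
    using has_derivative_unique by metis
  then have "inj (frechet_derivative \<phi> (at p))"
    by (metis injI)
  then show "surj (frechet_derivative \<phi> (at p))"
    using linear_injective_imp_surjective d\<phi> linear_frechet_derivative by blast
qed

lemma inner_Basis_eq_0_if_in_span:
  assumes "x \<in> span B" "B \<subseteq> Basis" "a \<in> Basis" "a \<notin> B"
  shows "x \<bullet> a = 0"
proof -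
  have "orthogonal a x"
    by (rule orthogonal_to_span[OF assms(1)])
      (use assms in \<open>auto simp: orthogonal_def intro!: inner_not_same_Basis\<close>)
  then show ?thesis
    by (simp add: orthogonal_def inner_commute)
qed

lemma obtain_two_Basis_outside:
  assumes "B \<subseteq> (Basis :: 'a::euclidean_space set)" "card B + 2 \<le> DIM('a)"
  obtains a b where "a \<in> Basis - B" "b \<in> Basis - B" "a \<noteq> b"
proof -
  have "card (Basis - B) = DIM('a) - card B"
    using assms(1) finite_subset[OF assms(1)] by (simp add: card_Diff_subset)
  then have "2 \<le> card (Basis - B)"
    using assms(2) by linarith
  then show ?thesis
    using that by (auto simp: numeral_2_eq_2 card_le_Suc_iff)
qed

lemma submanifold_codim2_defining_pair:
  fixes \<Sigma> :: "'a::euclidean_space set"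
  assumes "smooth_submanifold_codim2 \<Sigma>" "p \<in> \<Sigma>"
  obtains U f1 f2 where "open U" "p \<in> U" "Ck_on 3 U f1" "Ck_on 3 U f2"
    "\<And>x. x \<in> \<Sigma> \<inter> U \<Longrightarrow> f1 x = 0 \<and> f2 x = 0"
    "0 < grad_inner f1 f1 p * grad_inner f2 f2 p - (grad_inner f1 f2 p)\<^sup>2"
proof -
  obtain U V \<phi> B where "p \<in> U" and diffeo: "smooth_diffeo U V \<phi>"
    and B: "B \<subseteq> Basis" "card B + 2 \<le> DIM('a)"
    and "\<phi> ` (\<Sigma> \<inter> U) = V \<inter> span B \<or> (\<exists>b\<in>B. \<phi> ` (\<Sigma> \<inter> U) = V \<inter> {y\<in>span B. y \<bullet> b \<ge> 0})"
    using bspec[OF assms(1)[unfolded smooth_submanifold_codim2_def] assms(2)] by blast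
  then have flat: "\<phi> ` (\<Sigma> \<inter> U) \<subseteq> span B"
    by (elim disjE bexE) auto
  obtain a b where ab: "a \<in> Basis - B" "b \<in> Basis - B" "a \<noteq> b"
    using obtain_two_Basis_outside[OF B] .
  have "open U" "Ck_on 3 U \<phi>"
    using diffeo unfolding smooth_diffeo_def smooth_on_def by auto
  then have "Ck_on 3 U (\<lambda>x. \<phi> x \<bullet> a)" "Ck_on 3 U (\<lambda>x. \<phi> x \<bullet> b)"
    by (simp_all add: Ck_on_inner_const)
  moreover have "\<phi> x \<bullet> a = 0 \<and> \<phi> x \<bullet> b = 0" if "x \<in> \<Sigma> \<inter> U" for x
    using flat that ab B inner_Basis_eq_0_if_in_span by blast
  moreover have "grad_inner (\<lambda>x. \<phi> x \<bullet> u) (\<lambda>x. \<phi> x \<bullet> v) p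
      = (\<Sum>e\<in>Basis. (frechet_derivative \<phi> (at p) e \<bullet> u) * (frechet_derivative \<phi> (at p) e \<bullet> v))" for u v
    using smooth_diffeo_derivative_surj(1)[OF diffeo \<open>p \<in> U\<close>]
    by (simp add: grad_inner_def partial_inner_const)
  then have "0 < grad_inner (\<lambda>x. \<phi> x \<bullet> a) (\<lambda>x. \<phi> x \<bullet> a) p * grad_inner (\<lambda>x. \<phi> x \<bullet> b) (\<lambda>x. \<phi> x \<bullet> b) p
      - (grad_inner (\<lambda>x. \<phi> x \<bullet> a) (\<lambda>x. \<phi> x \<bullet> b) p)\<^sup>2"
    using gram_det_pos_if_surj[OF linear_frechet_derivative smooth_diffeo_derivative_surj(2)[OF diffeo \<open>p \<in> U\<close>]]
      smooth_diffeo_derivative_surj(1)[OF diffeo \<open>p \<in> U\<close>] ab by simp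
  ultimately show ?thesis
    using that \<open>open U\<close> \<open>p \<in> U\<close> by blast
qed

lemma continuous_on_above_near:
  fixes D :: "'a::metric_space \<Rightarrow> real"
  assumes "open U" "p \<in> U" "continuous_on U D" "a < D p"
  obtains r where "0 < r" "cball p r \<subseteq> U" "\<And>y. y \<in> cball p r \<Longrightarrow> a < D y"
proof -
  have "open (U \<inter> D -` {a <..})" "p \<in> U \<inter> D -` {a <..}"
    using assms by (auto intro: continuous_open_preimage)
  then obtain r where "0 < r" "cball p r \<subseteq> U \<inter> D -` {a <..}"
    using open_contains_cball by metis
  then show ?thesis
    using that by blast
qed

lemma defining_pair_bounded_near:
  fixes f1 f2 :: "'a::euclidean_space \<Rightarrow> real"
  assumes U: "open U" "p \<in> U" and f: "Ck_on 3 U f1" "Ck_on 3 U f2"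
    and gram: "0 < grad_inner f1 f1 p * grad_inner f2 f2 p - (grad_inner f1 f2 p)\<^sup>2"
  obtains r \<Lambda> d0 where "0 < r" "cball p r \<subseteq> U" "1 \<le> \<Lambda>" "0 < d0"
    "\<And>y. y \<in> cball p r \<Longrightarrow> bounded_defining_pair \<Lambda> d0 f1 f2 y"
proof -
  define D where "D y = grad_inner f1 f1 y * grad_inner f2 f2 y - (grad_inner f1 f2 y)\<^sup>2" for y
  have "continuous_on U D"
    unfolding D_def by (intro continuous_intros continuous_on_grad_inner f)
  moreover have "D p / 2 < D p"
    using gram by (simp add: D_def)
  ultimately obtain r where r: "0 < r" "cball p r \<subseteq> U" "\<And>y. y \<in> cball p r \<Longrightarrow> D p / 2 < D y"
    using continuous_on_above_near[OF U] by blast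
  obtain B1 B2 where B: "0 \<le> B1" "0 \<le> B2"
    "\<And>x. x \<in> cball p r \<Longrightarrow> partials_bounded B1 f1 x" "\<And>x. x \<in> cball p r \<Longrightarrow> partials_bounded B2 f2 x"
    using Ck_on_3_bounded_on_compact[OF f(1) compact_cball r(2)]
      Ck_on_3_bounded_on_compact[OF f(2) compact_cball r(2)] by metis
  define B where "B = B1 + B2"
  define \<Lambda> where "\<Lambda> = 1 + B + real DIM('a) * (4 * B\<^sup>2)"
  have \<Lambda>: "1 \<le> \<Lambda>" "B \<le> \<Lambda>" "real DIM('a) * (2 * B\<^sup>2) \<le> \<Lambda>" "real DIM('a) * (4 * B\<^sup>2) \<le> \<Lambda>"
    using B(1,2) by (simp_all add: \<Lambda>_def B_def)
  show ?thesis
  proof (rule that[OF r(1,2) \<Lambda>(1)])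
    show "0 < D p / 2"
      using gram by (simp add: D_def)
    fix y assume y: "y \<in> cball p r"
    have f: "partials_bounded B f1 y" "partials_bounded B f2 y"
      using partials_bounded_mono[OF B(3)[OF y]] partials_bounded_mono[OF B(4)[OF y]] B(1,2)
      by (simp_all add: B_def)
    have "\<bar>grad_inner_deriv g h i y\<bar> \<le> \<Lambda> \<and> \<bar>grad_inner_deriv2 g h i y\<bar> \<le> \<Lambda>"
      if "g \<in> {f1, f2}" "h \<in> {f1, f2}" "i \<in> Basis" for g h i
    proof -
      have "partials_bounded B g y" "partials_bounded B h y"
        using that f by auto
      from grad_inner_deriv_bounds[OF this that(3)] show ?thesis
        using \<Lambda>(3,4) by linarith
    qed
    moreover have "partials_bounded \<Lambda> f1 y" "partials_bounded \<Lambda> f2 y"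
      using f partials_bounded_mono \<Lambda>(2) by blast+
    ultimately show "bounded_defining_pair \<Lambda> (D p / 2) f1 f2 y"
      using r(3)[OF y] unfolding bounded_defining_pair_def partials_bounded_def D_def by auto
  qed
qed

section \<open>A maximum principle near barriers\<close>

lemma continuous_attains_max_off_zeros:
  fixes Q w :: "'a::metric_space \<Rightarrow> real"
  assumes K: "compact K" "continuous_on K Q" and w: "continuous_on {y\<in>K. 0 < Q y} w"
    and x0: "x0 \<in> K" "0 < Q x0" and "0 < \<eta>"
    and small: "\<And>y. y \<in> K \<Longrightarrow> 0 < Q y \<Longrightarrow> Q y < \<eta> \<Longrightarrow> w y < w x0"
  obtains xm where "xm \<in> K" "0 < Q xm" "\<And>y. y \<in> K \<Longrightarrow> 0 < Q y \<Longrightarrow> w y \<le> w xm"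
proof -
  define K\<eta> where "K\<eta> = K \<inter> Q -` {\<eta>..}"
  have "closed K\<eta>"
    unfolding K\<eta>_def using K by (intro continuous_closed_preimage) (auto intro: compact_imp_closed)
  then have "compact K\<eta>"
    using compact_Int_closed[OF K(1)] unfolding K\<eta>_def by (metis inf.left_idem)
  moreover have "x0 \<in> K\<eta>"
    using small[OF x0] x0 by (force simp: K\<eta>_def)
  moreover have "continuous_on K\<eta> w"
    by (rule continuous_on_subset[OF w]) (use \<open>0 < \<eta>\<close> in \<open>auto simp: K\<eta>_def\<close>)
  ultimately obtain xm where xm: "xm \<in> K\<eta>" "\<And>y. y \<in> K\<eta> \<Longrightarrow> w y \<le> w xm"
    using continuous_attains_sup by (metis empty_iff)
  show ?thesis
  proof (rule that)
    show "xm \<in> K" "0 < Q xm"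
      using xm(1) \<open>0 < \<eta>\<close> by (auto simp: K\<eta>_def)
    show "w y \<le> w xm" if "y \<in> K" "0 < Q y" for y
      using xm(2)[of y] xm(2)[OF \<open>x0 \<in> K\<eta>\<close>] small[OF that] that by (force simp: K\<eta>_def)
  qed
qed

lemma isCont_le_on_closure:
  fixes f :: "'a::metric_space \<Rightarrow> real"
  assumes "isCont f x" "x \<in> closure A" "\<And>y. y \<in> A \<Longrightarrow> f y \<le> M"
  shows "f x \<le> M"
proof -
  obtain s where "\<forall>n. s n \<in> A" "s \<longlonglongrightarrow> x"
    using assms(2) closure_sequential by blast
  moreover from this(2) have "(\<lambda>n. f (s n)) \<longlonglongrightarrow> f x"
    by (rule isCont_tendsto_compose[OF assms(1)])
  ultimately show ?thesis
    using assms(3) by (intro LIMSEQ_le_const2[of "\<lambda>n. f (s n)" "f x" M]) auto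
qed

lemma divide_plus_one_bounds:
  fixes e R :: real
  assumes "0 < e" "0 \<le> R"
  shows "0 < e / (R + 1)" "e / (R + 1) * R \<le> e"
  using assms by (simp_all add: field_simps)

lemma small_weight_exists:
  fixes a b C X :: real
  assumes "0 < a" "0 < b" "0 \<le> X"
  obtains \<epsilon> where "0 < \<epsilon>" "\<epsilon> * C < a" "\<epsilon> * X \<le> b"
proof
  define \<epsilon> where "\<epsilon> = min (a / 2 / (\<bar>C\<bar> + 1)) (b / (X + 1))"
  have A: "0 < a / 2 / (\<bar>C\<bar> + 1)" "a / 2 / (\<bar>C\<bar> + 1) * \<bar>C\<bar> \<le> a / 2"
    using divide_plus_one_bounds[of "a / 2" "\<bar>C\<bar>"] assms(1) by auto
  have B: "0 < b / (X + 1)" "b / (X + 1) * X \<le> b"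
    using divide_plus_one_bounds[of b X] assms(2,3) by auto
  show "0 < \<epsilon>"
    using A(1) B(1) by (simp add: \<epsilon>_def)
  have "\<epsilon> \<le> a / 2 / (\<bar>C\<bar> + 1)" "\<epsilon> \<le> b / (X + 1)"
    by (simp_all add: \<epsilon>_def)
  then have "\<epsilon> * \<bar>C\<bar> \<le> a / 2 / (\<bar>C\<bar> + 1) * \<bar>C\<bar>" "\<epsilon> * X \<le> b / (X + 1) * X"
    using assms(3) by (simp_all only: mult_right_mono abs_ge_zero)
  moreover have "\<epsilon> * C \<le> \<epsilon> * \<bar>C\<bar>"
    using \<open>0 < \<epsilon>\<close> by (simp add: mult_left_mono)
  ultimately show "\<epsilon> * C < a" "\<epsilon> * X \<le> b"
    using A(2) B(2) assms(1) by linarith+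
qed

text \<open>Subtracting \<open>\<epsilon> G\<close> for a barrier \<open>G\<close> from a subharmonic function rules out maxima near the
  zero set of \<open>Q\<close>.\<close>

definition is_barrier :: "'a::euclidean_space set \<Rightarrow> 'a \<Rightarrow> real \<Rightarrow> ('a \<Rightarrow> real) \<Rightarrow> ('a \<Rightarrow> real) \<Rightarrow> bool"
  where "is_barrier S p r Q G \<longleftrightarrow>
    continuous_on (cball p r) Q \<and> {y \<in> cball p r. 0 < Q y} \<subseteq> S \<and> ball p r \<subseteq> closure {y. 0 < Q y} \<and>
    continuous_on {y \<in> cball p r. 0 < Q y} G \<and>
    (\<exists>c0. \<forall>y\<in>cball p r. 0 < Q y \<longrightarrow> - ln (Q y) - c0 \<le> G y) \<and>
    (\<exists>G1 G2 C. \<forall>y\<in>ball p r. 0 < Q y \<longrightarrow> (\<forall>i\<in>Basis.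
        ((\<lambda>s. G (y + s *\<^sub>R i)) has_real_derivative G1 i y) (at 0)
        \<and> ((\<lambda>s. G1 i (y + s *\<^sub>R i)) has_real_derivative G2 i y) (at 0)) \<and> (\<Sum>i\<in>Basis. G2 i y) \<le> C)"

context
  fixes S :: "'a::euclidean_space set" and u :: "'a \<Rightarrow> real"
  assumes S: "open S" and u: "Ck_on 2 S u" "\<forall>x\<in>S. 0 \<le> laplacian u x"
begin

lemma barrier_perturbation_no_interior_max:
  fixes G :: "'a \<Rightarrow> real" and G1 G2 :: "'a \<Rightarrow> 'a \<Rightarrow> real" and \<beta> p :: 'a and \<delta> \<epsilon> :: real
    and w :: "'a \<Rightarrow> real"
  defines "w \<equiv> \<lambda>y. u y + (\<beta> \<bullet> y + \<delta> * ((y - p) \<bullet> (y - p))) - \<epsilon> * G y"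
  assumes P: "open P" "P \<subseteq> S" "xm \<in> P"
    and max: "\<And>y. y \<in> P \<Longrightarrow> w y \<le> w xm"
    and G: "\<And>y i. y \<in> P \<Longrightarrow> i \<in> Basis \<Longrightarrow>
      ((\<lambda>s. G (y + s *\<^sub>R i)) has_real_derivative G1 i y) (at 0)
      \<and> ((\<lambda>s. G1 i (y + s *\<^sub>R i)) has_real_derivative G2 i y) (at 0)"
    and small: "\<epsilon> * (\<Sum>i\<in>Basis. G2 i xm) < 2 * real DIM('a) * \<delta>"
  shows False
proof -
  obtain e where e: "0 < e" "ball xm e \<subseteq> P"
    using P open_contains_ball by blast
  have line: "xm + t *\<^sub>R i \<in> P" if "\<bar>t\<bar> < e" "i \<in> Basis" for t i
    using e that by (auto simp: dist_norm)
  have "partial (partial u i) i xm + 2 * \<delta> - \<epsilon> * G2 i xm \<le> 0" if i: "i \<in> Basis" for i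
  proof (rule local_max_second_derivative_nonpos[OF e(1), where g="\<lambda>t. w (xm + t *\<^sub>R i)"
        and g'="\<lambda>t. partial u i (xm + t *\<^sub>R i) + (\<beta> \<bullet> i + 2 * \<delta> * ((xm + t *\<^sub>R i - p) \<bullet> i))
          - \<epsilon> * G1 i (xm + t *\<^sub>R i)"])
    show "w (xm + t *\<^sub>R i) \<le> w (xm + 0 *\<^sub>R i)" if "\<bar>t\<bar> < e" for t
      using max[OF line[OF that i]] by simp
    show "((\<lambda>t. w (xm + t *\<^sub>R i)) has_real_derivative partial u i (xm + t *\<^sub>R i)
        + (\<beta> \<bullet> i + 2 * \<delta> * ((xm + t *\<^sub>R i - p) \<bullet> i)) - \<epsilon> * G1 i (xm + t *\<^sub>R i)) (at t)"
      if "\<bar>t\<bar> < e" for t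
    proof -
      have "((\<lambda>s. u (xm + s *\<^sub>R i)) has_real_derivative partial u i (xm + t *\<^sub>R i)) (at t)"
        using line[OF that i] P(2) Ck_on_2_partials[OF u(1) _ i] DERIV_line_partial[of u xm t i] by auto
      moreover have "((\<lambda>s. G (xm + s *\<^sub>R i)) has_real_derivative G1 i (xm + t *\<^sub>R i)) (at t)"
        using G[OF line[OF that i] i] DERIV_line_shift[of G xm t i] by simp
      ultimately show ?thesis
        unfolding w_def by (intro DERIV_diff DERIV_add DERIV_cmult DERIV_line_paraboloid)
    qed
    show "((\<lambda>t. partial u i (xm + t *\<^sub>R i) + (\<beta> \<bullet> i + 2 * \<delta> * ((xm + t *\<^sub>R i - p) \<bullet> i))
        - \<epsilon> * G1 i (xm + t *\<^sub>R i)) has_real_derivative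
        partial (partial u i) i xm + 2 * \<delta> - \<epsilon> * G2 i xm) (at 0)"
    proof -
      have "((\<lambda>s. partial u i (xm + s *\<^sub>R i)) has_real_derivative partial (partial u i) i xm) (at 0)"
        using DERIV_line_partial[of "partial u i" xm 0 i] Ck_on_2_partials[OF u(1) _ i] P by auto
      then show ?thesis
        using G[OF P(3) i] by (intro DERIV_diff DERIV_add DERIV_cmult DERIV_line_paraboloid_deriv i) auto
    qed
  qed
  then have "(\<Sum>i\<in>Basis. partial (partial u i) i xm + 2 * \<delta> - \<epsilon> * G2 i xm) \<le> 0"
    by (simp add: sum_nonpos)
  moreover have "(\<Sum>i\<in>Basis. partial (partial u i) i xm + 2 * \<delta> - \<epsilon> * G2 i xm)
      = laplacian u xm + 2 * real DIM('a) * \<delta> - \<epsilon> * (\<Sum>i\<in>Basis. G2 i xm)"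
    by (simp add: laplacian_def sum.distrib sum_subtractf sum_distrib_left)
  moreover have "0 \<le> laplacian u xm"
    using u(2) P by blast
  ultimately show False
    using small by linarith
qed

lemma barrier_perturbation_max_on_sphere:
  fixes Q G :: "'a \<Rightarrow> real" and G1 G2 :: "'a \<Rightarrow> 'a \<Rightarrow> real" and \<beta> p :: 'a and \<delta> \<epsilon> :: real
    and w :: "'a \<Rightarrow> real"
  defines "w \<equiv> \<lambda>y. u y + (\<beta> \<bullet> y + \<delta> * ((y - p) \<bullet> (y - p))) - \<epsilon> * G y"
  assumes Q: "continuous_on (cball p r) Q" "{y \<in> cball p r. 0 < Q y} \<subseteq> S"
    and G: "continuous_on {y \<in> cball p r. 0 < Q y} G"
      "\<forall>y\<in>cball p r. 0 < Q y \<longrightarrow> - ln (Q y) - c0 \<le> G y"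
    and G': "\<forall>y\<in>ball p r. 0 < Q y \<longrightarrow> (\<forall>i\<in>Basis.
        ((\<lambda>s. G (y + s *\<^sub>R i)) has_real_derivative G1 i y) (at 0)
        \<and> ((\<lambda>s. G1 i (y + s *\<^sub>R i)) has_real_derivative G2 i y) (at 0)) \<and> (\<Sum>i\<in>Basis. G2 i y) \<le> C"
    and u_le: "\<forall>x\<in>S. u x \<le> c"
    and \<delta>\<epsilon>: "0 < \<delta>" "0 < \<epsilon>" "\<epsilon> * C < 2 * real DIM('a) * \<delta>"
    and x0: "x0 \<in> cball p r" "0 < Q x0"
  obtains y where "y \<in> sphere p r" "0 < Q y" "w x0 \<le> w y"
proof -
  define H where "H = c + (norm \<beta> * (norm p + r) + \<delta> * r\<^sup>2)"
  have H: "w y \<le> H - \<epsilon> * G y" if "y \<in> cball p r" "0 < Q y" for y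
    using u_le Q(2) that paraboloid_le_on_cball[OF that(1), of \<delta> \<beta>] \<delta>\<epsilon>(1)
    unfolding w_def H_def by fastforce
  define \<eta> where "\<eta> = exp ((w x0 - H - \<epsilon> * c0) / \<epsilon>)"
  have "w y < w x0" if "y \<in> cball p r" "0 < Q y" "Q y < \<eta>" for y
  proof -
    have "ln (Q y) < (w x0 - H - \<epsilon> * c0) / \<epsilon>"
      using that(2,3) unfolding \<eta>_def by (metis ln_exp ln_less_cancel_iff exp_gt_zero)
    then have "\<epsilon> * ln (Q y) < w x0 - H - \<epsilon> * c0"
      using \<delta>\<epsilon>(2) by (simp add: pos_less_divide_eq mult.commute)
    moreover have "\<epsilon> * (- ln (Q y) - c0) \<le> \<epsilon> * G y"
      using G(2) that(1,2) \<delta>\<epsilon>(2) by (simp add: mult_left_mono)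
    ultimately show ?thesis
      using H[OF that(1,2)] by (simp add: algebra_simps)
  qed
  moreover have "continuous_on {y \<in> cball p r. 0 < Q y} w"
    unfolding w_def using Ck_on_imp_continuous_on[OF u(1)] Q(2)
    by (intro continuous_intros G(1)) (auto intro: continuous_on_subset)
  ultimately obtain xm where xm: "xm \<in> cball p r" "0 < Q xm"
    "\<And>y. y \<in> cball p r \<Longrightarrow> 0 < Q y \<Longrightarrow> w y \<le> w xm"
    using continuous_attains_max_off_zeros[where w=w and \<eta>=\<eta>, OF compact_cball Q(1) _ x0]
    by (auto simp: \<eta>_def)
  have "xm \<notin> ball p r"
  proof
    assume xm_ball: "xm \<in> ball p r"
    define P where "P = ball p r \<inter> Q -` {0<..}"
    have "open P"
      unfolding P_def using continuous_on_subset[OF Q(1) ball_subset_cball]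
      by (intro continuous_open_preimage) auto
    moreover have "P \<subseteq> S" "xm \<in> P"
      using Q(2) xm xm_ball by (auto simp: P_def)
    moreover have "\<epsilon> * (\<Sum>i\<in>Basis. G2 i xm) < 2 * real DIM('a) * \<delta>"
    proof -
      have "(\<Sum>i\<in>Basis. G2 i xm) \<le> C"
        using G' xm_ball xm(2) by blast
      then show ?thesis
        using \<delta>\<epsilon> mult_left_mono[of "\<Sum>i\<in>Basis. G2 i xm" C \<epsilon>] by linarith
    qed
    ultimately show False
      using xm(3) G' unfolding w_def P_def
      by (intro barrier_perturbation_no_interior_max[where P=P and xm=xm and G=G and ?G1.0=G1 and ?G2.0=G2
            and \<beta>=\<beta> and p=p and \<delta>=\<delta> and \<epsilon>=\<epsilon>]) (auto simp: P_def)
  qed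
  then show ?thesis
    using that xm(1,2) xm(3)[OF x0] by auto
qed

lemma is_barrier_maximum_principle_off_zeros:
  assumes barrier: "is_barrier S p r Q G" and u_le: "\<forall>x\<in>S. u x \<le> c"
    and M: "\<forall>y\<in>sphere p r \<inter> S. u y + \<beta> \<bullet> y \<le> M"
    and x0: "x0 \<in> cball p r" "0 < Q x0"
  shows "u x0 + \<beta> \<bullet> x0 \<le> M"
proof (rule field_le_epsilon)
  fix \<eta> :: real assume "0 < \<eta>"
  obtain c0 G1 G2 C where Q: "continuous_on (cball p r) Q" "{y \<in> cball p r. 0 < Q y} \<subseteq> S"
    and G: "continuous_on {y \<in> cball p r. 0 < Q y} G"
      "\<forall>y\<in>cball p r. 0 < Q y \<longrightarrow> - ln (Q y) - c0 \<le> G y"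
    and G': "\<forall>y\<in>ball p r. 0 < Q y \<longrightarrow> (\<forall>i\<in>Basis.
        ((\<lambda>s. G (y + s *\<^sub>R i)) has_real_derivative G1 i y) (at 0)
        \<and> ((\<lambda>s. G1 i (y + s *\<^sub>R i)) has_real_derivative G2 i y) (at 0)) \<and> (\<Sum>i\<in>Basis. G2 i y) \<le> C"
    using barrier unfolding is_barrier_def by blast
  obtain Qm where Qm: "0 < Qm" "\<And>y. y \<in> cball p r \<Longrightarrow> Q y \<le> Qm"
    using compact_imp_bounded[OF compact_continuous_image[OF Q(1) compact_cball]]
    unfolding bounded_pos by (auto simp: abs_le_iff)
  define Gm where "Gm = - ln Qm - c0"
  have Gm: "Gm \<le> G y" if "y \<in> cball p r" "0 < Q y" for y
  proof -
    have "ln (Q y) \<le> ln Qm"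
      using Qm(2)[OF that(1)] that(2) by simp
    then show ?thesis
      using G(2) that unfolding Gm_def by force
  qed
  define \<delta> where "\<delta> = \<eta> / 2 / (r\<^sup>2 + 1)"
  have \<delta>: "0 < \<delta>" "\<delta> * r\<^sup>2 \<le> \<eta> / 2"
    unfolding \<delta>_def using divide_plus_one_bounds[of "\<eta> / 2" "r\<^sup>2"] \<open>0 < \<eta>\<close> by simp_all
  obtain \<epsilon> where \<epsilon>: "0 < \<epsilon>" "\<epsilon> * C < 2 * real DIM('a) * \<delta>" "\<epsilon> * (G x0 - Gm) \<le> \<eta> / 2"
    using small_weight_exists[of "2 * real DIM('a) * \<delta>" "\<eta> / 2" "G x0 - Gm" C] \<delta>(1) \<open>0 < \<eta>\<close> Gm[OF x0]
    by auto
  obtain y where y: "y \<in> sphere p r" "0 < Q y" and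
    "u x0 + (\<beta> \<bullet> x0 + \<delta> * ((x0 - p) \<bullet> (x0 - p))) - \<epsilon> * G x0
       \<le> u y + (\<beta> \<bullet> y + \<delta> * ((y - p) \<bullet> (y - p))) - \<epsilon> * G y"
    using barrier_perturbation_max_on_sphere[OF Q G G' u_le \<delta>(1) \<epsilon>(1,2) x0] by blast
  moreover have "y \<in> S" "\<delta> * ((y - p) \<bullet> (y - p)) = \<delta> * r\<^sup>2"
    using y Q(2) by (auto simp: dist_norm norm_minus_commute simp flip: power2_norm_eq_inner)
  moreover have "\<epsilon> * Gm \<le> \<epsilon> * G y" "0 \<le> \<delta> * ((x0 - p) \<bullet> (x0 - p))"
    using Gm[of y] y \<epsilon>(1) \<delta>(1) by auto
  moreover have "u y + \<beta> \<bullet> y \<le> M"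
    using M y(1) \<open>y \<in> S\<close> by blast
  moreover have "\<epsilon> * (G x0 - Gm) = \<epsilon> * G x0 - \<epsilon> * Gm"
    by (simp add: right_diff_distrib)
  ultimately show "u x0 + \<beta> \<bullet> x0 \<le> M + \<eta>"
    using \<delta>(2) \<epsilon>(3) by linarith
qed

lemma is_barrier_maximum_principle:
  assumes "is_barrier S p r Q G" "\<forall>x\<in>S. u x \<le> c"
    and "\<forall>y\<in>sphere p r \<inter> S. u y + \<beta> \<bullet> y \<le> M"
    and x: "x \<in> ball p r \<inter> S"
  shows "u x + \<beta> \<bullet> x \<le> M"
proof (rule isCont_le_on_closure[where f="\<lambda>x. u x + \<beta> \<bullet> x" and A="ball p r \<inter> {y. 0 < Q y}"])
  show "isCont (\<lambda>x. u x + \<beta> \<bullet> x) x"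
    using Ck_on_imp_continuous_on[OF u(1)] S x
    by (intro continuous_intros) (simp add: continuous_on_eq_continuous_at)
  show "x \<in> closure (ball p r \<inter> {y. 0 < Q y})"
    using assms(1) x open_Int_closure_subset[OF open_ball] unfolding is_barrier_def by blast
  show "u y + \<beta> \<bullet> y \<le> M" if "y \<in> ball p r \<inter> {y. 0 < Q y}" for y
    using is_barrier_maximum_principle_off_zeros[OF assms(1-3)] that by auto
qed

end

lemma is_barrier_trivial:
  assumes "open S" "p \<in> S"
  obtains r where "0 < r" "is_barrier S p r (\<lambda>_. 1) (\<lambda>_. 0)"
proof -
  obtain r where "0 < r" "cball p r \<subseteq> S"
    using assms open_contains_cball by metis
  moreover have "\<forall>y\<in>ball p r. (\<forall>i\<in>Basis.
        ((\<lambda>s. 0) has_real_derivative 0) (at 0) \<and> ((\<lambda>s. 0) has_real_derivative 0) (at 0))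
        \<and> (\<Sum>i\<in>Basis. (0::real)) \<le> 0"
    by simp
  ultimately show ?thesis
    using that unfolding is_barrier_def by fastforce
qed

section \<open>The barrier near a submanifold of codimension two\<close>

lemma adj_form_pos_iff:
  assumes "1 \<le> \<Lambda>" "0 < d0" "bounded_defining_pair \<Lambda> d0 f1 f2 y"
  shows "0 < adj_form f1 f2 y \<longleftrightarrow> f1 y \<noteq> 0 \<or> f2 y \<noteq> 0"
  using log_sqrt_barrier_deriv2_sum_le(1)[OF assms] by (auto simp: adj_form_def)

lemma ball_subset_closure_adj_form_pos:
  assumes "1 \<le> \<Lambda>" "0 < d0" "\<And>y. y \<in> cball p r \<Longrightarrow> bounded_defining_pair \<Lambda> d0 f1 f2 y"
  shows "ball p r \<subseteq> closure {y. 0 < adj_form f1 f2 y}"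
proof
  fix x assume x: "x \<in> ball p r"
  show "x \<in> closure {y. 0 < adj_form f1 f2 y}"
  proof (rule ccontr)
    assume "x \<notin> closure {y. 0 < adj_form f1 f2 y}"
    then obtain e where e: "0 < e" "\<And>y. dist y x < e \<Longrightarrow> \<not> 0 < adj_form f1 f2 y"
      unfolding closure_approachable by auto
    define e' where "e' = min e (r - dist p x)"
    have "0 < e'"
      using e x by (simp add: e'_def)
    have "ball x e' \<subseteq> ball p r"
    proof
      fix y assume "y \<in> ball x e'"
      then have "dist p y \<le> dist p x + dist x y" "dist x y < r - dist p x"
        by (auto simp: e'_def dist_triangle)
      then show "y \<in> ball p r" by simp
    qed
    then have "f1 y = 0" if "y \<in> ball x e'" for y
      using e(2)[of y] that adj_form_pos_iff[OF assms(1,2,3)] by (force simp: e'_def dist_commute)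
    then have "(f1 has_derivative (\<lambda>h. 0)) (at x)"
      using has_derivative_transform_within_open[of "\<lambda>_. 0" "\<lambda>h. 0" x UNIV "ball x e'" f1] \<open>0 < e'\<close>
      by simp
    then have "grad_inner f1 f1 x = 0" "grad_inner f1 f2 x = 0"
      by (simp_all add: grad_inner_def partial_def frechet_derivative_at[symmetric])
    then show False
      using assms(2) assms(3)[of x] x by (simp add: bounded_defining_pair_def)
  qed
qed

lemma defining_pair_is_barrier:
  fixes f1 f2 :: "'a::euclidean_space \<Rightarrow> real"
  assumes U: "cball p r \<subseteq> U" "Ck_on 3 U f1" "Ck_on 3 U f2"
    and bounded: "1 \<le> \<Lambda>" "0 < d0" "\<And>y. y \<in> cball p r \<Longrightarrow> bounded_defining_pair \<Lambda> d0 f1 f2 y"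
    and S: "\<And>y. y \<in> cball p r \<Longrightarrow> f1 y \<noteq> 0 \<or> f2 y \<noteq> 0 \<Longrightarrow> y \<in> S"
  shows "is_barrier S p r (adj_form f1 f2) (log_sqrt_barrier (barrier_K \<Lambda> d0 DIM('a)) f1 f2)"
proof -
  define K Q where "K = barrier_K \<Lambda> d0 DIM('a)" and "Q = adj_form f1 f2"
  have Q: "continuous_on (cball p r) Q"
    unfolding Q_def using continuous_on_adj_form[OF U(2,3)] U(1) by (rule continuous_on_subset)
  have Q_pos: "0 < Q y \<longleftrightarrow> f1 y \<noteq> 0 \<or> f2 y \<noteq> 0" if "y \<in> cball p r" for y
    unfolding Q_def using adj_form_pos_iff[OF bounded(1,2) bounded(3)[OF that]] .
  obtain Qm where "\<forall>z\<in>Q ` cball p r. norm z \<le> Qm"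
    using compact_imp_bounded[OF compact_continuous_image[OF Q compact_cball]]
    unfolding bounded_iff by blast
  then have Qm: "Q y \<le> Qm" if "y \<in> cball p r" for y
    using that by (auto simp: abs_le_iff)
  have "- ln (Q y) - K * sqrt Qm \<le> log_sqrt_barrier K f1 f2 y" if "y \<in> cball p r" "0 < Q y" for y
    using Qm[OF that(1)] that(2) barrier_K_nonneg[OF bounded(1,2)]
    by (simp add: log_sqrt_barrier_def Q_def K_def mult_left_mono)
  moreover have "continuous_on {y \<in> cball p r. 0 < Q y} (log_sqrt_barrier K f1 f2)"
    unfolding log_sqrt_barrier_def[abs_def] Q_def[symmetric]
    using continuous_on_subset[OF Q, of "{y \<in> cball p r. 0 < Q y}"]
    by (intro continuous_intros) (auto simp: subset_eq)
  moreover have "(\<forall>i\<in>Basis.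
        ((\<lambda>s. log_sqrt_barrier K f1 f2 (y + s *\<^sub>R i)) has_real_derivative log_sqrt_barrier_deriv K f1 f2 i y) (at 0)
        \<and> ((\<lambda>s. log_sqrt_barrier_deriv K f1 f2 i (y + s *\<^sub>R i)) has_real_derivative
            log_sqrt_barrier_deriv2 K f1 f2 i y) (at 0))
      \<and> (\<Sum>i\<in>Basis. log_sqrt_barrier_deriv2 K f1 f2 i y) \<le> barrier_C \<Lambda> d0 DIM('a)"
    if "y \<in> ball p r" "0 < Q y" for y
  proof -
    have "y \<in> cball p r" "y \<in> U"
      using that U(1) by auto
    then show ?thesis
      using that(2) DERIV_line_log_sqrt_barrier[OF U(2,3), of _ y 0]
        DERIV_line_log_sqrt_barrier_deriv[OF U(2,3), of _ y 0]
        log_sqrt_barrier_deriv2_sum_le(2)[OF bounded(1,2) bounded(3)] Q_pos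
      by (simp add: Q_def K_def)
  qed
  ultimately show ?thesis
    unfolding is_barrier_def Q_def[symmetric] K_def[symmetric]
    using Q Q_pos S ball_subset_closure_adj_form_pos[OF bounded] unfolding Q_def by blast
qed

lemma submanifold_codim2_barrier:
  fixes \<Sigma> :: "'a::euclidean_space set"
  assumes "open \<Omega>" "\<Sigma> \<subseteq> \<Omega>" "smooth_submanifold_codim2 \<Sigma>" "p \<in> \<Sigma>"
  obtains r Q G where "0 < r" "is_barrier (\<Omega> - \<Sigma>) p r Q G"
proof -
  obtain U f1 f2 where U: "open U" "p \<in> U" "Ck_on 3 U f1" "Ck_on 3 U f2"
    and zero: "\<And>x. x \<in> \<Sigma> \<inter> U \<Longrightarrow> f1 x = 0 \<and> f2 x = 0"
    and gram: "0 < grad_inner f1 f1 p * grad_inner f2 f2 p - (grad_inner f1 f2 p)\<^sup>2"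
    using submanifold_codim2_defining_pair[OF assms(3,4)] by blast
  obtain r \<Lambda> d0 where r: "0 < r" "cball p r \<subseteq> U" and bounded: "1 \<le> \<Lambda>" "0 < d0"
    "\<And>y. y \<in> cball p r \<Longrightarrow> bounded_defining_pair \<Lambda> d0 f1 f2 y"
    using defining_pair_bounded_near[OF U gram] by blast
  obtain r0 where r0: "0 < r0" "cball p r0 \<subseteq> \<Omega>"
    using assms(1,2,4) open_contains_cball by blast
  define r' where "r' = min r r0"
  have r': "cball p r' \<subseteq> cball p r" "cball p r' \<subseteq> \<Omega>"
    using r0 by (auto simp: r'_def)
  then have "y \<in> \<Omega> - \<Sigma>" if "y \<in> cball p r'" "f1 y \<noteq> 0 \<or> f2 y \<noteq> 0" for y
    using zero[of y] that r(2) by blast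
  then have "is_barrier (\<Omega> - \<Sigma>) p r' (adj_form f1 f2) (log_sqrt_barrier (barrier_K \<Lambda> d0 DIM('a)) f1 f2)"
    using r(2) r' by (intro defining_pair_is_barrier[OF _ U(3,4) bounded(1,2)] bounded(3)) auto
  moreover have "0 < r'"
    using r r0 by (simp add: r'_def)
  ultimately show ?thesis
    using that by blast
qed

section \<open>The maximum principle off a removable set\<close>

lemma SUP_approached_in_closure:
  fixes v :: "'a::heine_borel \<Rightarrow> real"
  assumes "bounded A" "A \<noteq> {}" "bdd_above (v ` A)"
  obtains l where "l \<in> closure A" "\<And>\<eta>. 0 < \<eta> \<Longrightarrow> \<exists>y\<in>A. dist y l < \<eta> \<and> (SUP x\<in>A. v x) - \<eta> < v y"
proof -
  have "\<forall>k::nat. \<exists>x\<in>A. (SUP x\<in>A. v x) - 1 / (real k + 1) < v x"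
  proof
    fix k :: nat
    have "(SUP x\<in>A. v x) - 1 / (real k + 1) < (SUP x\<in>A. v x)"
      by simp
    then show "\<exists>x\<in>A. (SUP x\<in>A. v x) - 1 / (real k + 1) < v x"
      using less_cSUP_iff[OF assms(2,3)] by blast
  qed
  then obtain x where x: "\<And>k. x k \<in> A" "\<And>k. (SUP x\<in>A. v x) - 1 / (real k + 1) < v (x k)"
    by metis
  obtain l \<sigma> where l: "l \<in> closure A" "strict_mono \<sigma>" "(x \<circ> \<sigma>) \<longlonglongrightarrow> l"
    using compact_imp_seq_compact[OF compact_closure[THEN iffD2, OF assms(1)]] x(1) closure_subset
    unfolding seq_compact_def by (metis subsetD)
  show ?thesis
  proof (rule that[OF l(1)])
    fix \<eta> :: real assume "0 < \<eta>"
    obtain N where N: "\<And>k. N \<le> k \<Longrightarrow> dist (x (\<sigma> k)) l < \<eta>"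
      using l(3) \<open>0 < \<eta>\<close> unfolding lim_sequentially by auto
    obtain m :: nat where m: "1 / (real m + 1) < \<eta>"
      using reals_Archimedean[OF \<open>0 < \<eta>\<close>] by (metis inverse_eq_divide of_nat_Suc add.commute)
    define k where "k = \<sigma> (max N m)"
    have "m \<le> k"
      using seq_suble[OF l(2), of "max N m"] by (simp add: k_def)
    then have "1 / (real k + 1) \<le> 1 / (real m + 1)"
      by (simp add: frac_le)
    then show "\<exists>y\<in>A. dist y l < \<eta> \<and> (SUP x\<in>A. v x) - \<eta> < v y"
      using x[of k] N[of "max N m"] m by (intro bexI[of _ "x k"]) (auto simp: k_def)
  qed
qed

lemma le_at_continuity_point_if_approached:
  fixes v :: "'a::metric_space \<Rightarrow> real"
  assumes "continuous_on T v" "l \<in> T" "A \<subseteq> T"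
    and approach: "\<And>\<eta>. 0 < \<eta> \<Longrightarrow> \<exists>y\<in>A. dist y l < \<eta> \<and> M - \<eta> < v y"
  shows "M \<le> v l"
proof (rule field_le_epsilon)
  fix e :: real assume "0 < e"
  obtain d where d: "0 < d" "\<And>y. y \<in> T \<Longrightarrow> dist y l < d \<Longrightarrow> dist (v y) (v l) < e / 2"
    using assms(1,2) \<open>0 < e\<close> unfolding continuous_on_iff by (metis half_gt_zero)
  obtain y where y: "y \<in> A" "dist y l < min d (e / 2)" "M - min d (e / 2) < v y"
    using approach[of "min d (e / 2)"] d(1) \<open>0 < e\<close> by auto
  then have "dist (v y) (v l) < e / 2"
    using d(2)[of y] assms(3) by auto
  moreover have "min d (e / 2) \<le> e / 2"
    by simp
  ultimately show "M \<le> v l + e"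
    using y(3) unfolding dist_real_def by linarith
qed

lemma is_barrier_excludes_sup_point:
  fixes u :: "'a::euclidean_space \<Rightarrow> real"
  assumes u: "open S" "Ck_on 2 S u" "\<forall>x\<in>S. 0 \<le> laplacian u x" "\<forall>x\<in>S. u x \<le> c"
    and barrier: "0 < r" "is_barrier S l r Q G" and "0 < \<delta>"
    and sup: "\<forall>y\<in>S. u y + \<delta> * (y \<bullet> y) \<le> M"
    and approach: "\<And>\<eta>. 0 < \<eta> \<Longrightarrow> \<exists>y\<in>S. dist y l < \<eta> \<and> M - \<eta> < u y + \<delta> * (y \<bullet> y)"
  shows False
proof -
  have shift: "u y + (2 * \<delta>) *\<^sub>R l \<bullet> y = u y + \<delta> * (y \<bullet> y) - \<delta> * ((y - l) \<bullet> (y - l)) + \<delta> * (l \<bullet> l)" for y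
    by (simp add: algebra_simps inner_diff_left inner_diff_right inner_commute)
  have "u y + (2 * \<delta>) *\<^sub>R l \<bullet> y \<le> M - \<delta> * r\<^sup>2 + \<delta> * (l \<bullet> l)" if "y \<in> sphere l r \<inter> S" for y
  proof -
    have "(y - l) \<bullet> (y - l) = r\<^sup>2"
      using that by (simp add: dist_norm norm_minus_commute flip: power2_norm_eq_inner)
    then show ?thesis
      using sup that unfolding shift by force
  qed
  then have "u y + (2 * \<delta>) *\<^sub>R l \<bullet> y \<le> M - \<delta> * r\<^sup>2 + \<delta> * (l \<bullet> l)" if "y \<in> ball l r \<inter> S" for y
    using is_barrier_maximum_principle[OF u(1-3) barrier(2) u(4)] that by blast
  then have ball: "u y + \<delta> * (y \<bullet> y) \<le> M - \<delta> * r\<^sup>2 + \<delta> * ((y - l) \<bullet> (y - l))"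
    if "y \<in> ball l r \<inter> S" for y
    using that unfolding shift by fastforce
  define \<eta> where "\<eta> = min (r / 2) (\<delta> * r\<^sup>2 / 2)"
  have "0 < \<eta>"
    using barrier(1) \<open>0 < \<delta>\<close> by (simp add: \<eta>_def)
  then obtain y where y: "y \<in> S" "dist y l < \<eta>" "M - \<eta> < u y + \<delta> * (y \<bullet> y)"
    using approach by blast
  have "(y - l) \<bullet> (y - l) \<le> (r / 2)\<^sup>2"
    using y(2) by (simp add: \<eta>_def dist_norm power_mono flip: power2_norm_eq_inner)
  then have "\<delta> * ((y - l) \<bullet> (y - l)) \<le> \<delta> * r\<^sup>2 / 4"
    using \<open>0 < \<delta>\<close> mult_left_mono by (fastforce simp: power_divide)
  moreover have "y \<in> ball l r"
  proof -
    have "dist l y < r / 2"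
      using y(2) by (simp add: \<eta>_def dist_commute)
    then show ?thesis
      using zero_le_dist[of l y] by (simp del: zero_le_dist)
  qed
  moreover have "0 < \<delta> * r\<^sup>2" "\<eta> \<le> \<delta> * r\<^sup>2 / 2"
    using \<open>0 < \<delta>\<close> barrier(1) by (simp_all add: \<eta>_def)
  ultimately show False
    using ball[of y] y(1,3) by auto
qed

context
  fixes \<Omega> \<Sigma> :: "'a::euclidean_space set" and u :: "'a \<Rightarrow> real" and c :: real
  assumes \<Omega>: "open \<Omega>" "bounded \<Omega>" "\<Sigma> \<subseteq> \<Omega>" "open (\<Omega> - \<Sigma>)"
    and barriers: "\<And>l. l \<in> \<Omega> \<Longrightarrow> \<exists>r Q G. 0 < r \<and> is_barrier (\<Omega> - \<Sigma>) l r Q G"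
    and u: "Ck_on 2 (\<Omega> - \<Sigma>) u" "\<forall>x\<in>\<Omega> - \<Sigma>. 0 \<le> laplacian u x" "\<forall>x\<in>\<Omega> - \<Sigma>. u x \<le> c"
      "continuous_on (closure \<Omega> - \<Sigma>) u" "\<forall>x\<in>frontier \<Omega>. u x \<le> 0"
begin

lemma paraboloid_perturbation_le:
  assumes "0 < \<delta>" "\<forall>x\<in>closure \<Omega>. x \<bullet> x \<le> R" "x \<in> \<Omega> - \<Sigma>"
  shows "u x + \<delta> * (x \<bullet> x) \<le> \<delta> * R"
proof -
  define v where "v y = u y + \<delta> * (y \<bullet> y)" for y
  have "v y \<le> c + \<delta> * R" if "y \<in> \<Omega> - \<Sigma>" for y
    using u(3) assms(2) that closure_subset \<open>0 < \<delta>\<close> unfolding v_def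
    by (smt (verit) DiffD1 mult_left_mono subsetD)
  then have bdd: "bdd_above (v ` (\<Omega> - \<Sigma>))"
    by (intro bdd_aboveI2) blast
  obtain l where l: "l \<in> closure (\<Omega> - \<Sigma>)"
    and approach: "\<And>\<eta>. 0 < \<eta> \<Longrightarrow> \<exists>y\<in>\<Omega> - \<Sigma>. dist y l < \<eta> \<and> (SUP y\<in>\<Omega> - \<Sigma>. v y) - \<eta> < v y"
    using SUP_approached_in_closure[OF bounded_subset[OF \<Omega>(2)] _ bdd] assms(3) by blast
  have sup: "\<forall>y\<in>\<Omega> - \<Sigma>. v y \<le> (SUP y\<in>\<Omega> - \<Sigma>. v y)"
    using bdd by (auto intro: cSUP_upper)
  have "l \<notin> \<Omega>"
  proof
    assume "l \<in> \<Omega>"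
    then obtain r Q G where "0 < r" "is_barrier (\<Omega> - \<Sigma>) l r Q G"
      using barriers by blast
    then show False
      using is_barrier_excludes_sup_point[OF \<Omega>(4) u(1-3)] \<open>0 < \<delta>\<close> sup approach
      unfolding v_def by blast
  qed
  then have "l \<in> frontier \<Omega>" "l \<in> closure \<Omega> - \<Sigma>"
    using l closure_mono[of "\<Omega> - \<Sigma>" \<Omega>] \<Omega>(1,3) by (auto simp: frontier_def interior_open)
  then have "v l \<le> \<delta> * R"
    using u(5) assms(2) \<open>0 < \<delta>\<close> unfolding v_def frontier_def by (smt (verit) DiffD1 mult_left_mono)
  moreover have "continuous_on (closure \<Omega> - \<Sigma>) v"
    unfolding v_def[abs_def] by (intro continuous_intros u(4))
  then have "(SUP y\<in>\<Omega> - \<Sigma>. v y) \<le> v l"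
    using \<open>l \<in> closure \<Omega> - \<Sigma>\<close> approach closure_subset
    by (intro le_at_continuity_point_if_approached[where A="\<Omega> - \<Sigma>"]) auto
  ultimately show ?thesis
    using sup assms(3) unfolding v_def by force
qed

lemma maximum_principle_with_barriers:
  assumes "x \<in> \<Omega> - \<Sigma>"
  shows "u x \<le> 0"
proof -
  obtain B where "\<forall>x\<in>closure \<Omega>. norm x \<le> B"
    using bounded_closure[OF \<Omega>(2)] unfolding bounded_iff by blast
  then have R: "\<forall>x\<in>closure \<Omega>. x \<bullet> x \<le> B\<^sup>2"
    by (simp add: power_mono flip: power2_norm_eq_inner)
  show ?thesis
  proof (rule field_le_epsilon)
    fix e :: real assume "0 < e"
    define \<delta> where "\<delta> = e / (B\<^sup>2 + 1)"
    have "0 < \<delta>" "\<delta> * B\<^sup>2 \<le> e"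
      unfolding \<delta>_def using divide_plus_one_bounds[of e "B\<^sup>2"] \<open>0 < e\<close> by simp_all
    moreover have "0 \<le> \<delta> * (x \<bullet> x)"
      using \<open>0 < \<delta>\<close> by simp
    ultimately show "u x \<le> 0 + e"
      using paraboloid_perturbation_le[OF \<open>0 < \<delta>\<close> R assms] by linarith
  qed
qed

end

theorem lemma2p10:
  fixes \<Omega> \<Sigma> :: "'a::euclidean_space set" and u :: "'a \<Rightarrow> real" and \<alpha> :: real
  assumes "DIM('a) \<ge> 2"
    and "open \<Omega>" and "connected \<Omega>" and "bounded \<Omega>"
    and "0 < \<alpha>" and "\<alpha> < 1" and "C2alpha_boundary \<alpha> \<Omega>"
    and "\<Sigma> \<subseteq> \<Omega>" and "closedin (top_of_set \<Omega>) \<Sigma>"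
    and "smooth_submanifold_codim2 \<Sigma>"
    and "Ck_on 2 (\<Omega> - \<Sigma>) u" and "C1_upto \<Omega> \<Sigma> u"
    and "\<forall>x\<in>\<Omega> - \<Sigma>. laplacian u x \<ge> 0"
    and "\<forall>x\<in>\<Omega> - \<Sigma>. 0 \<le> u x \<and> u x \<le> 1"
    and "\<forall>x\<in>frontier \<Omega>. u x = 0"
  shows "\<forall>x\<in>\<Omega> - \<Sigma>. u x = 0"
proof -
  obtain T where "closed T" "\<Sigma> = \<Omega> \<inter> T"
    using assms(9) unfolding closedin_closed by blast
  then have open_off: "open (\<Omega> - \<Sigma>)"
    using assms(2) by (simp add: Diff_Int open_Diff)
  have barriers: "\<exists>r Q G. 0 < r \<and> is_barrier (\<Omega> - \<Sigma>) l r Q G" if "l \<in> \<Omega>" for l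
  proof (cases "l \<in> \<Sigma>")
    case True
    then show ?thesis
      using submanifold_codim2_barrier[OF assms(2,8,10)] by metis
  next
    case False
    then show ?thesis
      using is_barrier_trivial[OF open_off] that by blast
  qed
  have "continuous_on (closure \<Omega> - \<Sigma>) u"
    using assms(12) unfolding C1_upto_def by blast
  moreover have "\<forall>x\<in>\<Omega> - \<Sigma>. u x \<le> 1" "\<forall>x\<in>frontier \<Omega>. u x \<le> 0"
    using assms(14,15) by auto
  ultimately have "u x \<le> 0" if "x \<in> \<Omega> - \<Sigma>" for x
    using maximum_principle_with_barriers[OF assms(2,4,8) open_off barriers assms(11,13)] that
    by blast
  then show ?thesis
    using assms(14) by force
qed

end
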